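(* Consider an RBM with observed variables $X\in\{-1,1\}^n$ as in the context. Fix $\delta>0$, $\epsilon>0$, $\zeta>0$. Suppose that for every observed variable $u$ we are given a set $n(u)$ which is a subset of the MRF neighborhood of $u$ and contains every $i$ for which there is $T\subseteq[n]$ with $u,i\in T$ and $|\hat f(T)|\ge\zeta$. Suppose that we are given $M$ i.i.d. samples of $X$ from the RBM and run the regression procedure of the context at each $u$. There is an absolute constant $C>0$ such that if \[M\ge C\,\gamma^2\ln(8\cdot n\cdot 2^D/\delta)/\epsilon^2\quad\text{and}\quad\zeta\le\frac{\sqrt\epsilon}{\psi\sqrt{1+e^{2\gamma}}},\] then with probability at least $1-\delta$, for all observed variables $u$, \[\mathbb{E}\big[(\mathbb{P}(X_u=1|X_{[n]\setminus\{u\}})-\sigma(\hat w_u\cdot z_u))^2\big]\le\epsilon,\] where the expectation is over $X$ drawn from the marginal of the RBM (with $\hat w_u$ fixed) and $z_u$ is the feature vector of $X$ at $u$.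
   Context: RBM: $\mathbb{P}(X=x,Y=y)\propto\exp(x^TJy+h^Tx+g^Ty)$ over observed $X\in\{-1,1\}^n$ and latent $Y\in\{-1,1\}^m$. The marginal of $X$ is $\propto\exp(f(x))$, $f(x)=\sum_j\rho(J_j\cdot x+g_j)+h^Tx$, $\rho(t)=\log(e^t+e^{-t})$, $J_j$ the $j$-th column of $J$; $f=\sum_{T\subseteq[n]}\hat f(T)\chi_T$, $\chi_T(x)=\prod_{i\in T}x_i$. MRF neighborhood of $u$: all $i\ne u$ with $\hat f(T)\ne0$ for some $T\ni u,i$. $D$: max size of an MRF neighborhood; $\gamma=\max_u\sum_{T\ni u}|\hat f(T)|$; $\psi:=\max_{u\in[n]}|\{T\subseteq[n]:u\in T,\ \hat f(T)\ne0\}|$. $\sigma(t)=1/(1+e^{-t})$. Regression at $u$: feature vector $z_u=(\chi_T(X))_{T\subseteq n(u)}\in\{-1,1\}^{2^{|n(u)|}}$, label $y=X_u$; from samples $(z^{(k)},y^{(k)})_{k=1}^M$, $\hat w_u\in\arg\min\{\frac1M\sum_{k=1}^M\ln(1+e^{-y^{(k)}(w\cdot z^{(k)})}):w\in\mathbb{R}^{2^{|n(u)|}},\ \|w\|_1\le2\gamma\}$. *)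

theory Defs
  imports Complex_Main "HOL-Library.FuncSet"
begin

definition cube :: "nat \<Rightarrow> (nat \<Rightarrow> real) set" where
  "cube n = {x. (\<forall>i<n. x i = 1 \<or> x i = -1) \<and> (\<forall>i\<ge>n. x i = 0)}"

definition rbm_weight :: "nat \<Rightarrow> nat \<Rightarrow> (nat \<Rightarrow> nat \<Rightarrow> real) \<Rightarrow> (nat \<Rightarrow> real) \<Rightarrow> (nat \<Rightarrow> real)
    \<Rightarrow> (nat \<Rightarrow> real) \<Rightarrow> real" where
  "rbm_weight n m J h g x =
     (\<Sum>y\<in>cube m. exp ((\<Sum>i<n. \<Sum>j<m. x i * J i j * y j) + (\<Sum>i<n. h i * x i) + (\<Sum>j<m. g j * y j)))"

definition rbm_marginal :: "nat \<Rightarrow> nat \<Rightarrow> (nat \<Rightarrow> nat \<Rightarrow> real) \<Rightarrow> (nat \<Rightarrow> real) \<Rightarrow> (nat \<Rightarrow> real)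
    \<Rightarrow> (nat \<Rightarrow> real) \<Rightarrow> real" where
  "rbm_marginal n m J h g x =
     rbm_weight n m J h g x / (\<Sum>x'\<in>cube n. rbm_weight n m J h g x')"

definition rho :: "real \<Rightarrow> real" where
  "rho t = ln (exp t + exp (- t))"

definition rbm_f :: "nat \<Rightarrow> nat \<Rightarrow> (nat \<Rightarrow> nat \<Rightarrow> real) \<Rightarrow> (nat \<Rightarrow> real) \<Rightarrow> (nat \<Rightarrow> real)
    \<Rightarrow> (nat \<Rightarrow> real) \<Rightarrow> real" where
  "rbm_f n m J h g x = (\<Sum>j<m. rho ((\<Sum>i<n. J i j * x i) + g j)) + (\<Sum>i<n. h i * x i)"

definition chi :: "nat set \<Rightarrow> (nat \<Rightarrow> real) \<Rightarrow> real" where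
  "chi T x = (\<Prod>i\<in>T. x i)"

definition fourier_coeff :: "nat \<Rightarrow> ((nat \<Rightarrow> real) \<Rightarrow> real) \<Rightarrow> nat set \<Rightarrow> real" where
  "fourier_coeff n F T = (\<Sum>x\<in>cube n. F x * chi T x) / 2 ^ n"

definition mrf_nbhd :: "nat \<Rightarrow> ((nat \<Rightarrow> real) \<Rightarrow> real) \<Rightarrow> nat \<Rightarrow> nat set" where
  "mrf_nbhd n F u = {i\<in>{..<n}. i \<noteq> u \<and>
      (\<exists>T. T \<subseteq> {..<n} \<and> u \<in> T \<and> i \<in> T \<and> fourier_coeff n F T \<noteq> 0)}"

definition max_degree :: "nat \<Rightarrow> ((nat \<Rightarrow> real) \<Rightarrow> real) \<Rightarrow> nat" where
  "max_degree n F = Max (insert 0 ((\<lambda>u. card (mrf_nbhd n F u)) ` {..<n}))"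

definition gamma_param :: "nat \<Rightarrow> ((nat \<Rightarrow> real) \<Rightarrow> real) \<Rightarrow> real" where
  "gamma_param n F = Max (insert 0
     ((\<lambda>u. \<Sum>T\<in>{T. T \<subseteq> {..<n} \<and> u \<in> T}. \<bar>fourier_coeff n F T\<bar>) ` {..<n}))"

definition psi_param :: "nat \<Rightarrow> ((nat \<Rightarrow> real) \<Rightarrow> real) \<Rightarrow> nat" where
  "psi_param n F = Max (insert 0
     ((\<lambda>u. card {T. T \<subseteq> {..<n} \<and> u \<in> T \<and> fourier_coeff n F T \<noteq> 0}) ` {..<n}))"

definition cond_prob_one :: "nat \<Rightarrow> nat \<Rightarrow> (nat \<Rightarrow> nat \<Rightarrow> real) \<Rightarrow> (nat \<Rightarrow> real) \<Rightarrow> (nat \<Rightarrow> real)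
    \<Rightarrow> nat \<Rightarrow> (nat \<Rightarrow> real) \<Rightarrow> real" where
  "cond_prob_one n m J h g u x =
     rbm_marginal n m J h g (x(u := 1)) /
       (rbm_marginal n m J h g (x(u := 1)) + rbm_marginal n m J h g (x(u := -1)))"

definition sigmoid :: "real \<Rightarrow> real" where
  "sigmoid t = 1 / (1 + exp (- t))"

text \<open>w \<cdot> z_u(x), where z_u(x) = (chi_T(x))_{T \<subseteq> N}; w is indexed by subsets of N.\<close>
definition feat_dot :: "nat set \<Rightarrow> (nat set \<Rightarrow> real) \<Rightarrow> (nat \<Rightarrow> real) \<Rightarrow> real" where
  "feat_dot N w x = (\<Sum>T\<in>Pow N. w T * chi T x)"

definition l1_norm :: "nat set \<Rightarrow> (nat set \<Rightarrow> real) \<Rightarrow> real" where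
  "l1_norm N w = (\<Sum>T\<in>Pow N. \<bar>w T\<bar>)"

definition log_loss :: "nat set \<Rightarrow> nat \<Rightarrow> nat \<Rightarrow> (nat \<Rightarrow> nat \<Rightarrow> real) \<Rightarrow> (nat set \<Rightarrow> real) \<Rightarrow> real" where
  "log_loss N u M S w =
     (\<Sum>k<M. ln (1 + exp (- (S k u * feat_dot N w (S k))))) / real M"

definition is_regression_estimate ::
  "nat set \<Rightarrow> nat \<Rightarrow> nat \<Rightarrow> (nat \<Rightarrow> nat \<Rightarrow> real) \<Rightarrow> real \<Rightarrow> (nat set \<Rightarrow> real) \<Rightarrow> bool" where
  "is_regression_estimate N u M S \<gamma> w \<longleftrightarrow>
     l1_norm N w \<le> 2 * \<gamma> \<and>
     (\<forall>w'. l1_norm N w' \<le> 2 * \<gamma> \<longrightarrow> log_loss N u M S w \<le> log_loss N u M S w')"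

definition sample_prob :: "nat \<Rightarrow> nat \<Rightarrow> (nat \<Rightarrow> nat \<Rightarrow> real) \<Rightarrow> (nat \<Rightarrow> real) \<Rightarrow> (nat \<Rightarrow> real)
    \<Rightarrow> nat \<Rightarrow> ((nat \<Rightarrow> nat \<Rightarrow> real) \<Rightarrow> bool) \<Rightarrow> real" where
  "sample_prob n m J h g M E =
     (\<Sum>S\<in>{S\<in>PiE {..<M} (\<lambda>_. cube n). E S}. \<Prod>k<M. rbm_marginal n m J h g (S k))"

definition pred_mse :: "nat \<Rightarrow> nat \<Rightarrow> (nat \<Rightarrow> nat \<Rightarrow> real) \<Rightarrow> (nat \<Rightarrow> real) \<Rightarrow> (nat \<Rightarrow> real)
    \<Rightarrow> nat \<Rightarrow> nat set \<Rightarrow> (nat set \<Rightarrow> real) \<Rightarrow> real" where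
  "pred_mse n m J h g u N w =
     (\<Sum>x\<in>cube n. rbm_marginal n m J h g x *
        (cond_prob_one n m J h g u x - sigmoid (feat_dot N w x))\<^sup>2)"

end

theory Submission
  imports Defs "HOL-Probability.Hoeffding"
begin

text \<open>Fix a node \<open>u\<close>. Given the other spins, \<open>X\<^sub>u\<close> is Bernoulli with logit
  \<open>a(x) = f(x[u:=1]) - f(x[u:=-1])\<close>, which is twice the sum of \<open>fourier_coeff T * chi (T - {u}) x\<close>
  over the sets \<open>T\<close> containing \<open>u\<close>. Keeping only the sets with \<open>T - {u} \<subseteq> n(u)\<close> gives weights
  \<open>w\<^sub>0\<close> of \<open>\<ell>\<^sub>1\<close>-norm at most \<open>2\<gamma>\<close> whose logit is within \<open>2\<zeta>\<psi>\<close> of \<open>a\<close>, since every discarded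
  coefficient is below \<open>\<zeta>\<close>. Up to a constant, the population logistic loss of \<open>w\<close> is the
  expected Bernoulli KL divergence between the true conditional law and the one with logit
  \<open>w \<cdot> z\<^sub>u\<close>. So \<open>w\<^sub>0\<close> has divergence at most \<open>3\<epsilon>/4\<close>, and by Pinsker's inequality every \<open>w\<close> whose
  loss exceeds that of \<open>w\<^sub>0\<close> by at most \<open>\<epsilon>\<close> has mean squared error at most \<open>\<epsilon>\<close>. The regression
  estimate is such a \<open>w\<close> as soon as its empirical loss and that of \<open>w\<^sub>0\<close> are within \<open>\<epsilon>/2\<close> of
  their means. Symmetrization, the contraction principle for the 1-Lipschitz logistic loss and a
  union over the \<open>2 * 2 ^ |n(u)|\<close> signed characters bound the moment generating function of the
  uniform deviation over the \<open>\<ell>\<^sub>1\<close>-ball of radius \<open>2\<gamma>\<close>; a Chernoff bound then leaves failure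
  probability at most \<open>\<delta>/(2n)\<close> at each node, and a union bound over the nodes concludes, with
  \<open>C = 128\<close>.\<close>

section \<open>Expectations over independent samples\<close>

definition iid_expect :: "'a set \<Rightarrow> ('a \<Rightarrow> real) \<Rightarrow> nat \<Rightarrow> ((nat \<Rightarrow> 'a) \<Rightarrow> real) \<Rightarrow> real" where
  "iid_expect \<Omega> p M f = (\<Sum>S\<in>PiE {..<M} (\<lambda>_. \<Omega>). (\<Prod>k<M. p (S k)) * f S)"

lemma iid_expect_0 [simp]: "iid_expect \<Omega> p 0 f = f (\<lambda>_. undefined)"
  by (simp add: iid_expect_def)

lemma iid_expect_Suc:
  assumes "finite \<Omega>"
  shows "iid_expect \<Omega> p (Suc M) f = iid_expect \<Omega> p M (\<lambda>S. \<Sum>x\<in>\<Omega>. p x * f (S(M := x)))"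
proof -
  let ?P = "PiE {..<M} (\<lambda>_. \<Omega>)"
  have split: "PiE {..<Suc M} (\<lambda>_. \<Omega>) = (\<lambda>(x, S). S(M := x)) ` (\<Omega> \<times> ?P)"
    using PiE_insert_eq[of M "{..<M}" "\<lambda>_. \<Omega>"] by (simp add: lessThan_Suc)
  have inj: "inj_on (\<lambda>(x, S). S(M := x)) (\<Omega> \<times> ?P)"
    using inj_combinator[of M "{..<M}" "\<lambda>_. \<Omega>"] by simp
  have prod_upd: "(\<Prod>k<Suc M. p ((S(M := x)) k)) = p x * (\<Prod>k<M. p (S k))" for S x
    by (simp add: lessThan_Suc)
  have "iid_expect \<Omega> p (Suc M) f = (\<Sum>x\<in>\<Omega>. \<Sum>S\<in>?P. (\<Prod>k<Suc M. p ((S(M := x)) k)) * f (S(M := x)))"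
    unfolding iid_expect_def split sum.reindex[OF inj]
    by (simp add: sum.cartesian_product case_prod_unfold)
  also have "\<dots> = (\<Sum>S\<in>?P. (\<Prod>k<M. p (S k)) * (\<Sum>x\<in>\<Omega>. p x * f (S(M := x))))"
    by (subst sum.swap) (simp add: prod_upd sum_distrib_left mult_ac)
  finally show ?thesis by (simp add: iid_expect_def)
qed

lemma iid_expect_add: "iid_expect \<Omega> p M (\<lambda>S. f S + g S) = iid_expect \<Omega> p M f + iid_expect \<Omega> p M g"
  by (simp add: iid_expect_def distrib_left sum.distrib)

lemma iid_expect_diff: "iid_expect \<Omega> p M (\<lambda>S. f S - g S) = iid_expect \<Omega> p M f - iid_expect \<Omega> p M g"
  by (simp add: iid_expect_def sum_subtractf right_diff_distrib)

lemma iid_expect_cmult: "iid_expect \<Omega> p M (\<lambda>S. c * f S) = c * iid_expect \<Omega> p M f"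
  by (simp add: iid_expect_def sum_distrib_left mult_ac)

lemma iid_expect_divide: "iid_expect \<Omega> p M (\<lambda>S. f S / c) = iid_expect \<Omega> p M f / c"
  by (simp add: iid_expect_def sum_divide_distrib)

lemma iid_expect_sum: "iid_expect \<Omega> p M (\<lambda>S. \<Sum>i\<in>I. f i S) = (\<Sum>i\<in>I. iid_expect \<Omega> p M (f i))"
  by (simp add: iid_expect_def sum_distrib_left) (rule sum.swap)

lemma iid_expect_mono:
  assumes "\<And>x. x \<in> \<Omega> \<Longrightarrow> p x \<ge> 0" and "\<And>S. S \<in> PiE {..<M} (\<lambda>_. \<Omega>) \<Longrightarrow> f S \<le> g S"
  shows "iid_expect \<Omega> p M f \<le> iid_expect \<Omega> p M g"
  unfolding iid_expect_def
proof (rule sum_mono)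
  fix S assume S: "S \<in> PiE {..<M} (\<lambda>_. \<Omega>)"
  then have "(\<Prod>k<M. p (S k)) \<ge> 0" using assms(1) by (intro prod_nonneg) auto
  then show "(\<Prod>k<M. p (S k)) * f S \<le> (\<Prod>k<M. p (S k)) * g S"
    using assms(2)[OF S] by (rule mult_left_mono[rotated])
qed

lemma iid_expect_nonneg:
  assumes "\<And>x. x \<in> \<Omega> \<Longrightarrow> p x \<ge> 0" and "\<And>S. S \<in> PiE {..<M} (\<lambda>_. \<Omega>) \<Longrightarrow> f S \<ge> 0"
  shows "iid_expect \<Omega> p M f \<ge> 0"
  using iid_expect_mono[of \<Omega> p M "\<lambda>_. 0" f] assms by (simp add: iid_expect_def)

lemma iid_expect_one:
  assumes "finite \<Omega>" and "sum p \<Omega> = 1"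
  shows "iid_expect \<Omega> p M (\<lambda>_. 1) = 1"
  using prod_sum_PiE[of "{..<M}" "\<lambda>_. \<Omega>" "\<lambda>_ x. p x"] assms by (simp add: iid_expect_def)

lemma iid_expect_tail_le:
  assumes "\<And>x. x \<in> \<Omega> \<Longrightarrow> p x \<ge> 0" and "\<mu> \<ge> 0"
  shows "iid_expect \<Omega> p M (\<lambda>S. if c \<le> Z S then 1 else 0) \<le> exp (- \<mu> * c) * iid_expect \<Omega> p M (\<lambda>S. exp (\<mu> * Z S))"
proof -
  have "(if c \<le> Z S then 1 else 0) \<le> exp (- \<mu> * c) * exp (\<mu> * Z S)" for S
    using \<open>\<mu> \<ge> 0\<close> by (auto simp flip: exp_add simp: algebra_simps mult_left_mono)
  then have "iid_expect \<Omega> p M (\<lambda>S. if c \<le> Z S then 1 else 0)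
      \<le> iid_expect \<Omega> p M (\<lambda>S. exp (- \<mu> * c) * exp (\<mu> * Z S))"
    by (intro iid_expect_mono[OF assms(1)])
  then show ?thesis by (simp only: iid_expect_cmult)
qed

lemma iid_expect_all_ge:
  assumes "finite \<Omega>" "\<And>x. x \<in> \<Omega> \<Longrightarrow> p x \<ge> 0" "sum p \<Omega> = 1" and "finite U"
  shows "iid_expect \<Omega> p M (\<lambda>S. if \<forall>u\<in>U. P u S then 1 else 0)
           \<ge> 1 - (\<Sum>u\<in>U. iid_expect \<Omega> p M (\<lambda>S. if P u S then 0 else 1))"
proof -
  have "1 - (\<Sum>u\<in>U. if P u S then 0 else 1) \<le> (if \<forall>u\<in>U. P u S then 1 else 0 :: real)" for S
  proof (cases "\<forall>u\<in>U. P u S")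
    case False
    then obtain u where "u \<in> U" "\<not> P u S" by auto
    then have "(if P u S then 0 else 1) \<le> (\<Sum>u\<in>U. if P u S then 0 else 1 :: real)"
      using \<open>finite U\<close> by (intro member_le_sum) auto
    then show ?thesis using False \<open>\<not> P u S\<close> by simp
  qed simp
  then have "iid_expect \<Omega> p M (\<lambda>S. 1 - (\<Sum>u\<in>U. if P u S then 0 else 1))
      \<le> iid_expect \<Omega> p M (\<lambda>S. if \<forall>u\<in>U. P u S then 1 else 0)"
    by (intro iid_expect_mono[OF assms(2)])
  then show ?thesis
    by (simp add: iid_expect_diff iid_expect_sum iid_expect_one[OF assms(1,3)])
qed

section \<open>Symmetrization and contraction\<close>

text \<open>A point of the ghost space is a triple \<open>(x, x', \<sigma>)\<close>: a sample, an independent copy of it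
  and a Rademacher sign.\<close>

definition ghost_space :: "'a set \<Rightarrow> ('a \<times> 'a \<times> real) set" where
  "ghost_space \<Omega> = \<Omega> \<times> \<Omega> \<times> {1, -1}"

definition ghost_weight :: "('a \<Rightarrow> real) \<Rightarrow> 'a \<times> 'a \<times> real \<Rightarrow> real" where
  "ghost_weight p c = p (fst c) * p (fst (snd c)) / 2"

definition rademacher_sum :: "nat \<Rightarrow> (nat \<Rightarrow> 'a \<times> 'a \<times> real) \<Rightarrow> ('a \<Rightarrow> 'a \<Rightarrow> real) \<Rightarrow> real" where
  "rademacher_sum M T s = (\<Sum>k<M. snd (snd (T k)) * s (fst (T k)) (fst (snd (T k))))"

definition centered_sum :: "'a set \<Rightarrow> ('a \<Rightarrow> real) \<Rightarrow> nat \<Rightarrow> ('a \<Rightarrow> real) \<Rightarrow> (nat \<Rightarrow> 'a) \<Rightarrow> real" where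
  "centered_sum \<Omega> p M l S = (\<Sum>k<M. (\<Sum>y\<in>\<Omega>. p y * l y) - l (S k))"

lemma finite_ghost_space: "finite \<Omega> \<Longrightarrow> finite (ghost_space \<Omega>)"
  by (simp add: ghost_space_def)

lemma ghost_weight_nonneg:
  "(\<And>x. x \<in> \<Omega> \<Longrightarrow> p x \<ge> 0) \<Longrightarrow> c \<in> ghost_space \<Omega> \<Longrightarrow> ghost_weight p c \<ge> 0"
  by (auto simp: ghost_weight_def ghost_space_def)

lemma sum_ghost_space:
  assumes "finite \<Omega>"
  shows "(\<Sum>c\<in>ghost_space \<Omega>. ghost_weight p c * F c) =
         (\<Sum>x\<in>\<Omega>. \<Sum>x'\<in>\<Omega>. p x * p x' / 2 * (F (x, x', 1) + F (x, x', -1)))"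
proof -
  have pairs: "sum G (X \<times> Y) = (\<Sum>x\<in>X. \<Sum>y\<in>Y. G (x, y))" for G :: "_ \<Rightarrow> real" and X Y
    by (subst sum.cartesian_product) (simp add: case_prod_eta)
  show ?thesis
    by (simp add: ghost_space_def ghost_weight_def pairs algebra_simps)
qed

lemma rademacher_sum_upd:
  "rademacher_sum (Suc M) (T(M := c)) s = rademacher_sum M T s + snd (snd c) * s (fst c) (fst (snd c))"
  by (simp add: rademacher_sum_def lessThan_Suc add.commute)

lemma centered_sum_upd:
  "centered_sum \<Omega> p (Suc M) l (S(M := x)) = centered_sum \<Omega> p M l S + ((\<Sum>y\<in>\<Omega>. p y * l y) - l x)"
  by (simp add: centered_sum_def lessThan_Suc add.commute)

lemma centered_sum_eq:
  "sum p \<Omega> = 1 \<Longrightarrow> centered_sum \<Omega> p M l S = real M * (\<Sum>y\<in>\<Omega>. p y * l y) - (\<Sum>k<M. l (S k))"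
  by (simp add: centered_sum_def sum_subtractf)

lemma centered_sum_affine:
  assumes "sum p \<Omega> = 1"
  shows "centered_sum \<Omega> p M (\<lambda>x. c * l x + d) S = c * centered_sum \<Omega> p M l S"
proof -
  have "(\<Sum>y\<in>\<Omega>. p y * (c * l y + d)) = c * (\<Sum>y\<in>\<Omega>. p y * l y) + d * sum p \<Omega>"
    by (simp add: algebra_simps sum.distrib sum_distrib_left)
  then show ?thesis
    using assms by (simp add: centered_sum_eq[OF assms] sum.distrib sum_distrib_left algebra_simps)
qed

lemma exp_Max_average_le:
  fixes F :: "'w \<Rightarrow> 'a \<Rightarrow> real"
  assumes "finite \<Omega>" "\<And>y. y \<in> \<Omega> \<Longrightarrow> p y \<ge> 0" "sum p \<Omega> = 1"
    and "finite W" "W \<noteq> {}" and "\<mu> \<ge> 0"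
  shows "exp (\<mu> * Max ((\<lambda>w. \<Sum>y\<in>\<Omega>. p y * F w y) ` W)) \<le> (\<Sum>y\<in>\<Omega>. p y * exp (\<mu> * Max ((\<lambda>w. F w y) ` W)))"
proof -
  have "Max ((\<lambda>w. \<Sum>y\<in>\<Omega>. p y * F w y) ` W) \<le> (\<Sum>y\<in>\<Omega>. p y * Max ((\<lambda>w. F w y) ` W))"
    using assms by (subst Max_le_iff) (auto intro!: sum_mono mult_left_mono Max_ge)
  then have "\<mu> * Max ((\<lambda>w. \<Sum>y\<in>\<Omega>. p y * F w y) ` W) \<le> \<mu> * (\<Sum>y\<in>\<Omega>. p y * Max ((\<lambda>w. F w y) ` W))"
    using \<open>\<mu> \<ge> 0\<close> by (rule mult_left_mono)
  also have "\<dots> = (\<Sum>y\<in>\<Omega>. p y * (\<mu> * Max ((\<lambda>w. F w y) ` W)))"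
    by (simp add: sum_distrib_left mult.left_commute)
  finally have "exp (\<mu> * Max ((\<lambda>w. \<Sum>y\<in>\<Omega>. p y * F w y) ` W))
      \<le> exp (\<Sum>y\<in>\<Omega>. p y * (\<mu> * Max ((\<lambda>w. F w y) ` W)))"
    by simp
  also have "\<dots> \<le> (\<Sum>y\<in>\<Omega>. p y * exp (\<mu> * Max ((\<lambda>w. F w y) ` W)))"
    using convex_on_sum[OF assms(1) _ exp_convex, of p "\<lambda>y. \<mu> * Max ((\<lambda>w. F w y) ` W)"] assms(2,3)
    by fastforce
  finally show ?thesis .
qed

lemma symmetrization_step:
  fixes l :: "'w \<Rightarrow> 'a \<Rightarrow> real"
  assumes fin: "finite \<Omega>" and pnn: "\<And>x. x \<in> \<Omega> \<Longrightarrow> p x \<ge> 0" and p1: "sum p \<Omega> = 1"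
    and W: "finite W" "W \<noteq> {}" and mu: "\<mu> \<ge> 0"
  shows "(\<Sum>x\<in>\<Omega>. p x * exp (\<mu> * Max ((\<lambda>w. b w + ((\<Sum>y\<in>\<Omega>. p y * l w y) - l w x)) ` W)))
     \<le> (\<Sum>c\<in>ghost_space \<Omega>. ghost_weight p c *
           exp (\<mu> * Max ((\<lambda>w. b w + snd (snd c) * (l w (fst (snd c)) - l w (fst c))) ` W)))"
proof -
  define E where "E x y = exp (\<mu> * Max ((\<lambda>w. b w + (l w y - l w x)) ` W))" for x y
  have avg: "b w + ((\<Sum>y\<in>\<Omega>. p y * l w y) - l w x) = (\<Sum>y\<in>\<Omega>. p y * (b w + (l w y - l w x)))" for w x
  proof -
    have "(\<Sum>y\<in>\<Omega>. p y * (b w + (l w y - l w x)))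
        = sum p \<Omega> * b w + (\<Sum>y\<in>\<Omega>. p y * l w y) - sum p \<Omega> * l w x"
      by (simp add: algebra_simps sum.distrib sum_subtractf sum_distrib_left sum_distrib_right)
    then show ?thesis using p1 by simp
  qed
  have "(\<Sum>x\<in>\<Omega>. p x * exp (\<mu> * Max ((\<lambda>w. b w + ((\<Sum>y\<in>\<Omega>. p y * l w y) - l w x)) ` W)))
      \<le> (\<Sum>x\<in>\<Omega>. p x * (\<Sum>y\<in>\<Omega>. p y * E x y))"
    unfolding avg E_def using exp_Max_average_le[OF fin pnn p1 W mu] pnn
    by (intro sum_mono mult_left_mono) auto
  also have "\<dots> = (\<Sum>x\<in>\<Omega>. \<Sum>y\<in>\<Omega>. p x * p y / 2 * (E x y + E y x))"
  proof -
    have "(\<Sum>x\<in>\<Omega>. \<Sum>y\<in>\<Omega>. p x * p y * E y x) = (\<Sum>x\<in>\<Omega>. \<Sum>y\<in>\<Omega>. p x * p y * E x y)"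
      by (subst sum.swap) (simp add: mult_ac)
    then show ?thesis
      by (simp add: algebra_simps sum.distrib sum_distrib_left sum_divide_distrib[symmetric])
  qed
  also have "\<dots> = (\<Sum>c\<in>ghost_space \<Omega>. ghost_weight p c *
      exp (\<mu> * Max ((\<lambda>w. b w + snd (snd c) * (l w (fst (snd c)) - l w (fst c))) ` W)))"
    by (simp add: sum_ghost_space[OF fin] E_def algebra_simps)
  finally show ?thesis .
qed

lemma symmetrization:
  fixes l :: "'w \<Rightarrow> 'a \<Rightarrow> real"
  assumes fin: "finite \<Omega>" and pnn: "\<And>x. x \<in> \<Omega> \<Longrightarrow> p x \<ge> 0" and p1: "sum p \<Omega> = 1"
    and W: "finite W" "W \<noteq> {}" and mu: "\<mu> \<ge> 0"
  shows "iid_expect \<Omega> p M (\<lambda>S. exp (\<mu> * Max ((\<lambda>w. a w + centered_sum \<Omega> p M (l w) S) ` W)))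
     \<le> iid_expect (ghost_space \<Omega>) (ghost_weight p) M
          (\<lambda>T. exp (\<mu> * Max ((\<lambda>w. a w + rademacher_sum M T (\<lambda>x x'. l w x' - l w x)) ` W)))"
proof (induction M arbitrary: a)
  case 0
  then show ?case by (simp add: centered_sum_def rademacher_sum_def)
next
  case (Suc M)
  let ?G = "ghost_space \<Omega>" and ?q = "ghost_weight p"
  define d where "d w x = (\<Sum>y\<in>\<Omega>. p y * l w y) - l w x" for w x
  define r where "r w c = snd (snd c) * (l w (fst (snd c)) - l w (fst c))" for w c
  define R where "R T w = rademacher_sum M T (\<lambda>x x'. l w x' - l w x)" for T w
  have "iid_expect \<Omega> p (Suc M) (\<lambda>S. exp (\<mu> * Max ((\<lambda>w. a w + centered_sum \<Omega> p (Suc M) (l w) S) ` W)))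
      = (\<Sum>x\<in>\<Omega>. p x * iid_expect \<Omega> p M
           (\<lambda>S. exp (\<mu> * Max ((\<lambda>w. (a w + d w x) + centered_sum \<Omega> p M (l w) S) ` W))))"
    by (simp add: iid_expect_Suc[OF fin] centered_sum_upd iid_expect_sum iid_expect_cmult d_def algebra_simps)
  also have "\<dots> \<le> (\<Sum>x\<in>\<Omega>. p x * iid_expect ?G ?q M (\<lambda>T. exp (\<mu> * Max ((\<lambda>w. (a w + d w x) + R T w) ` W))))"
    using Suc.IH pnn unfolding R_def by (intro sum_mono mult_left_mono) auto
  also have "\<dots> = iid_expect ?G ?q M (\<lambda>T. \<Sum>x\<in>\<Omega>. p x * exp (\<mu> * Max ((\<lambda>w. (a w + R T w) + d w x) ` W)))"
    by (simp add: iid_expect_sum iid_expect_cmult algebra_simps)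
  also have "\<dots> \<le> iid_expect ?G ?q M (\<lambda>T. \<Sum>c\<in>?G. ?q c * exp (\<mu> * Max ((\<lambda>w. (a w + R T w) + r w c) ` W)))"
    unfolding d_def r_def
  proof (rule iid_expect_mono)
    show "\<And>c. c \<in> ?G \<Longrightarrow> 0 \<le> ?q c" by (rule ghost_weight_nonneg[OF pnn])
  qed (rule symmetrization_step[OF fin pnn p1 W mu])
  also have "\<dots> = iid_expect ?G ?q (Suc M)
      (\<lambda>T. exp (\<mu> * Max ((\<lambda>w. a w + rademacher_sum (Suc M) T (\<lambda>x x'. l w x' - l w x)) ` W)))"
    by (simp add: iid_expect_Suc[OF finite_ghost_space[OF fin]] rademacher_sum_upd R_def r_def algebra_simps)
  finally show ?case .
qed

text \<open>Karamata's inequality for two points: \<open>(P, Q)\<close> is weakly majorized by \<open>(X, Y)\<close> and \<open>exp\<close> is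
  convex and increasing.\<close>

lemma exp_add_exp_le_of_majorized:
  fixes X Y P Q :: real
  assumes "P \<le> max X Y" "Q \<le> max X Y" "P + Q \<le> X + Y"
  shows "exp P + exp Q \<le> exp X + exp Y"
proof -
  have ordered: "exp P + exp Q \<le> exp X + exp Y"
    if "Y \<le> X" "Q \<le> P" "P \<le> X" "P + Q \<le> X + Y" for X Y P Q :: real
  proof (cases "Q \<le> Y")
    case True
    then show ?thesis using that by (simp add: add_mono)
  next
    case False
    define d where "d = X - P"
    have "d \<ge> 0" "Q \<le> Y + d" using that by (simp_all add: d_def)
    then have "exp Q \<le> exp (Y + d)" by simp
    moreover have "exp X + exp Y - exp (X - d) - exp (Y + d) = (exp d - 1) * (exp (X - d) - exp Y)"
      by (simp add: exp_diff exp_add field_simps)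
    moreover have "(exp d - 1) * (exp (X - d) - exp Y) \<ge> 0"
      using \<open>d \<ge> 0\<close> False that by (intro mult_nonneg_nonneg) (auto simp: d_def)
    moreover have "exp (X - d) = exp P" by (simp add: d_def)
    ultimately show ?thesis by linarith
  qed
  have "exp P + exp Q \<le> exp (max X Y) + exp (min X Y)"
    using assms ordered[of "min X Y" "max X Y" P Q] ordered[of "min X Y" "max X Y" Q P]
    by (cases "Q \<le> P") (auto simp: max_def min_def add.commute)
  then show ?thesis by (cases "X \<le> Y") (auto simp: max_def min_def)
qed

lemma exp_Max_plus_minus_le:
  fixes b u s :: "'w \<Rightarrow> real"
  assumes W: "finite W" "W \<noteq> {}" and mu: "\<mu> \<ge> 0"
    and us: "\<And>w. w \<in> W \<Longrightarrow> \<bar>u w\<bar> \<le> \<bar>s w\<bar>"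
    and uss: "\<And>w w'. w \<in> W \<Longrightarrow> w' \<in> W \<Longrightarrow> \<bar>u w - u w'\<bar> \<le> \<bar>s w - s w'\<bar>"
  shows "exp (\<mu> * Max ((\<lambda>w. b w + u w) ` W)) + exp (\<mu> * Max ((\<lambda>w. b w - u w) ` W))
       \<le> exp (\<mu> * Max ((\<lambda>w. b w + s w) ` W)) + exp (\<mu> * Max ((\<lambda>w. b w - s w) ` W))"
proof -
  have "Max ((\<lambda>w. b w + u w) ` W) \<in> (\<lambda>w. b w + u w) ` W" using W by (intro Max_in) auto
  then obtain w1 where w1: "w1 \<in> W" "Max ((\<lambda>w. b w + u w) ` W) = b w1 + u w1" by auto
  have "Max ((\<lambda>w. b w - u w) ` W) \<in> (\<lambda>w. b w - u w) ` W" using W by (intro Max_in) auto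
  then obtain w2 where w2: "w2 \<in> W" "Max ((\<lambda>w. b w - u w) ` W) = b w2 - u w2" by auto
  define X where "X = Max ((\<lambda>w. b w + s w) ` W)"
  define Y where "Y = Max ((\<lambda>w. b w - s w) ` W)"
  have X: "\<And>w. w \<in> W \<Longrightarrow> b w + s w \<le> X" unfolding X_def using W by (intro Max_ge) auto
  have Y: "\<And>w. w \<in> W \<Longrightarrow> b w - s w \<le> Y" unfolding Y_def using W by (intro Max_ge) auto
  have P: "b w1 + u w1 \<le> max X Y" and Q: "b w2 - u w2 \<le> max X Y"
    using X Y us w1(1) w2(1) by (fastforce simp: abs_if max_def split: if_splits)+
  have PQ: "(b w1 + u w1) + (b w2 - u w2) \<le> X + Y"
    using X[OF w1(1)] Y[OF w1(1)] X[OF w2(1)] Y[OF w2(1)] uss[OF w1(1) w2(1)]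
    by (auto simp: abs_if split: if_splits)
  have "exp (\<mu> * (b w1 + u w1)) + exp (\<mu> * (b w2 - u w2)) \<le> exp (\<mu> * X) + exp (\<mu> * Y)"
    using mult_left_mono[OF P mu] mult_left_mono[OF Q mu] mult_left_mono[OF PQ mu] mu
    by (intro exp_add_exp_le_of_majorized) (simp_all add: max_mult_distrib_left distrib_left)
  then show ?thesis using w1 w2 by (simp add: X_def Y_def)
qed

text \<open>The Ledoux--Talagrand contraction principle, proved one sign at a time.\<close>

lemma contraction_step:
  fixes s :: "'w \<Rightarrow> 'a \<Rightarrow> 'a \<Rightarrow> real" and \<phi> :: "real \<Rightarrow> real"
  assumes fin: "finite \<Omega>" and pnn: "\<And>x. x \<in> \<Omega> \<Longrightarrow> p x \<ge> 0"
    and W: "finite W" "W \<noteq> {}" and mu: "\<mu> \<ge> 0"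
    and lip: "\<And>x y. \<bar>\<phi> x - \<phi> y\<bar> \<le> \<bar>x - y\<bar>" and phi0: "\<phi> 0 = 0"
  shows "(\<Sum>c\<in>ghost_space \<Omega>. ghost_weight p c *
            exp (\<mu> * Max ((\<lambda>w. b w + snd (snd c) * \<phi> (s w (fst c) (fst (snd c)))) ` W)))
       \<le> (\<Sum>c\<in>ghost_space \<Omega>. ghost_weight p c *
            exp (\<mu> * Max ((\<lambda>w. b w + snd (snd c) * s w (fst c) (fst (snd c))) ` W)))"
proof -
  have "exp (\<mu> * Max ((\<lambda>w. b w + 1 * \<phi> (s w x x')) ` W)) + exp (\<mu> * Max ((\<lambda>w. b w + - 1 * \<phi> (s w x x')) ` W))
      \<le> exp (\<mu> * Max ((\<lambda>w. b w + 1 * s w x x') ` W)) + exp (\<mu> * Max ((\<lambda>w. b w + - 1 * s w x x') ` W))"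
    for x x'
    using exp_Max_plus_minus_le[OF W mu, of "\<lambda>w. \<phi> (s w x x')" "\<lambda>w. s w x x'" b] lip phi0
      lip[of _ 0] by simp
  then show ?thesis
    unfolding sum_ghost_space[OF fin] using pnn by (intro sum_mono mult_left_mono) auto
qed

lemma contraction:
  fixes s :: "'w \<Rightarrow> 'a \<Rightarrow> 'a \<Rightarrow> real" and \<phi> :: "real \<Rightarrow> real"
  assumes fin: "finite \<Omega>" and pnn: "\<And>x. x \<in> \<Omega> \<Longrightarrow> p x \<ge> 0"
    and W: "finite W" "W \<noteq> {}" and mu: "\<mu> \<ge> 0"
    and lip: "\<And>x y. \<bar>\<phi> x - \<phi> y\<bar> \<le> \<bar>x - y\<bar>" and phi0: "\<phi> 0 = 0"
  shows "iid_expect (ghost_space \<Omega>) (ghost_weight p) M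
           (\<lambda>T. exp (\<mu> * Max ((\<lambda>w. a w + rademacher_sum M T (\<lambda>x x'. \<phi> (s w x x'))) ` W)))
       \<le> iid_expect (ghost_space \<Omega>) (ghost_weight p) M
           (\<lambda>T. exp (\<mu> * Max ((\<lambda>w. a w + rademacher_sum M T (s w)) ` W)))"
proof (induction M arbitrary: a)
  case 0
  then show ?case by (simp add: rademacher_sum_def)
next
  case (Suc M)
  let ?G = "ghost_space \<Omega>" and ?q = "ghost_weight p"
  define Rp where "Rp T w = rademacher_sum M T (\<lambda>x x'. \<phi> (s w x x'))" for T w
  define Rs where "Rs T w = rademacher_sum M T (s w)" for T w
  define t where "t w c = snd (snd c) * s w (fst c) (fst (snd c))" for w c
  have q: "\<And>c. c \<in> ?G \<Longrightarrow> 0 \<le> ?q c" by (rule ghost_weight_nonneg[OF pnn])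
  have "iid_expect ?G ?q (Suc M) (\<lambda>T. exp (\<mu> * Max ((\<lambda>w. a w + rademacher_sum (Suc M) T (\<lambda>x x'. \<phi> (s w x x'))) ` W)))
     = iid_expect ?G ?q M (\<lambda>T. \<Sum>c\<in>?G. ?q c *
         exp (\<mu> * Max ((\<lambda>w. (a w + Rp T w) + snd (snd c) * \<phi> (s w (fst c) (fst (snd c)))) ` W)))"
    by (simp add: iid_expect_Suc[OF finite_ghost_space[OF fin]] rademacher_sum_upd Rp_def algebra_simps)
  also have "\<dots> \<le> iid_expect ?G ?q M (\<lambda>T. \<Sum>c\<in>?G. ?q c * exp (\<mu> * Max ((\<lambda>w. (a w + Rp T w) + t w c) ` W)))"
    unfolding t_def
  proof (rule iid_expect_mono)
    show "\<And>c. c \<in> ?G \<Longrightarrow> 0 \<le> ?q c" by (rule q)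
  qed (rule contraction_step[OF fin pnn W mu lip phi0])
  also have "\<dots> = (\<Sum>c\<in>?G. ?q c * iid_expect ?G ?q M (\<lambda>T. exp (\<mu> * Max ((\<lambda>w. (a w + t w c) + Rp T w) ` W))))"
    by (simp add: iid_expect_sum iid_expect_cmult algebra_simps)
  also have "\<dots> \<le> (\<Sum>c\<in>?G. ?q c * iid_expect ?G ?q M (\<lambda>T. exp (\<mu> * Max ((\<lambda>w. (a w + t w c) + Rs T w) ` W))))"
    using Suc.IH q unfolding Rp_def Rs_def by (intro sum_mono mult_left_mono) auto
  also have "\<dots> = iid_expect ?G ?q (Suc M) (\<lambda>T. exp (\<mu> * Max ((\<lambda>w. a w + rademacher_sum (Suc M) T (s w)) ` W)))"
    by (simp add: iid_expect_Suc[OF finite_ghost_space[OF fin]] iid_expect_sum iid_expect_cmult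
        rademacher_sum_upd Rs_def t_def algebra_simps)
  finally show ?case .
qed

lemma cosh_le_exp_half_square:
  fixes t :: real
  shows "cosh t \<le> exp (t\<^sup>2 / 2)"
proof -
  define h where "h = 2 * \<bar>t\<bar>"
  have H: "- h * (1/2) + ln (1 + (1/2) * (exp h - 1)) \<le> h\<^sup>2 / 8"
    using Hoeffdings_lemma_aux[of h "1/2"] by (simp add: h_def)
  have "(1 + exp h) / 2 = 1 + (1/2) * (exp h - 1)" by (simp add: field_simps)
  then have E: "ln ((1 + exp h) / 2) = ln (1 + (1/2) * (exp h - 1))" by (rule arg_cong)
  have "h\<^sup>2 / 8 + h * (1/2) = \<bar>t\<bar> + t\<^sup>2 / 2"
    by (simp add: h_def power2_eq_square algebra_simps abs_mult_self_eq)
  then have "ln ((1 + exp h) / 2) \<le> \<bar>t\<bar> + t\<^sup>2 / 2"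
    using H E by linarith
  then have "(1 + exp h) / 2 \<le> exp (\<bar>t\<bar> + t\<^sup>2 / 2)"
    by (metis add_pos_pos exp_gt_zero exp_ln exp_le_cancel_iff half_gt_zero zero_less_one)
  then have "exp (- \<bar>t\<bar>) * ((1 + exp h) / 2) \<le> exp (- \<bar>t\<bar>) * exp (\<bar>t\<bar> + t\<^sup>2 / 2)"
    by simp
  moreover have "exp (- \<bar>t\<bar>) * ((1 + exp h) / 2) = cosh t"
    by (cases "t \<ge> 0") (simp_all add: h_def cosh_def field_simps flip: exp_add)
  moreover have "exp (- \<bar>t\<bar>) * exp (\<bar>t\<bar> + t\<^sup>2 / 2) = exp (t\<^sup>2 / 2)"
    by (simp flip: exp_add)
  ultimately show ?thesis by simp
qed

lemma ghost_sign_mgf_le: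
  fixes b :: "'a \<Rightarrow> 'a \<Rightarrow> real"
  assumes fin: "finite \<Omega>" and pnn: "\<And>x. x \<in> \<Omega> \<Longrightarrow> p x \<ge> 0" and p1: "sum p \<Omega> = 1"
    and bnd: "\<And>x x'. x \<in> \<Omega> \<Longrightarrow> x' \<in> \<Omega> \<Longrightarrow> \<bar>b x x'\<bar> \<le> 1"
  shows "(\<Sum>c\<in>ghost_space \<Omega>. ghost_weight p c * exp (\<beta> * (snd (snd c) * b (fst c) (fst (snd c)))))
           \<le> exp (\<beta>\<^sup>2 / 2)"
proof -
  have "(\<Sum>c\<in>ghost_space \<Omega>. ghost_weight p c * exp (\<beta> * (snd (snd c) * b (fst c) (fst (snd c)))))
      = (\<Sum>x\<in>\<Omega>. \<Sum>x'\<in>\<Omega>. p x * p x' * cosh (\<beta> * b x x'))"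
    by (simp add: sum_ghost_space[OF fin] cosh_def algebra_simps add_divide_distrib)
  also have "\<dots> \<le> (\<Sum>x\<in>\<Omega>. \<Sum>x'\<in>\<Omega>. p x * p x' * exp (\<beta>\<^sup>2 / 2))"
  proof (intro sum_mono mult_left_mono)
    fix x x' assume x: "x \<in> \<Omega>" and x': "x' \<in> \<Omega>"
    show "0 \<le> p x * p x'" using pnn x x' by simp
    have "(b x x')\<^sup>2 \<le> 1" using bnd[OF x x'] by (simp add: abs_le_square_iff[of _ 1, simplified])
    then have "(\<beta> * b x x')\<^sup>2 \<le> \<beta>\<^sup>2"
      using mult_left_mono[of "(b x x')\<^sup>2" 1 "\<beta>\<^sup>2"] by (simp add: power_mult_distrib)
    then show "cosh (\<beta> * b x x') \<le> exp (\<beta>\<^sup>2 / 2)"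
      using cosh_le_exp_half_square[of "\<beta> * b x x'"] by (smt (verit) divide_right_mono exp_le_cancel_iff)
  qed
  also have "\<dots> = exp (\<beta>\<^sup>2 / 2)"
    using p1 by (simp add: sum_distrib_right[symmetric] sum_distrib_left[symmetric])
  finally show ?thesis .
qed

lemma rademacher_sum_mgf_le:
  fixes b :: "'a \<Rightarrow> 'a \<Rightarrow> real"
  assumes fin: "finite \<Omega>" and pnn: "\<And>x. x \<in> \<Omega> \<Longrightarrow> p x \<ge> 0" and p1: "sum p \<Omega> = 1"
    and bnd: "\<And>x x'. x \<in> \<Omega> \<Longrightarrow> x' \<in> \<Omega> \<Longrightarrow> \<bar>b x x'\<bar> \<le> 1"
  shows "iid_expect (ghost_space \<Omega>) (ghost_weight p) M (\<lambda>T. exp (\<beta> * rademacher_sum M T b))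
     \<le> exp (real M * \<beta>\<^sup>2 / 2)"
proof (induction M)
  case 0
  then show ?case by (simp add: rademacher_sum_def)
next
  case (Suc M)
  let ?G = "ghost_space \<Omega>" and ?q = "ghost_weight p"
  define I where "I = (\<Sum>c\<in>?G. ?q c * exp (\<beta> * (snd (snd c) * b (fst c) (fst (snd c)))))"
  have q: "\<And>c. c \<in> ?G \<Longrightarrow> 0 \<le> ?q c" by (rule ghost_weight_nonneg[OF pnn])
  have "iid_expect ?G ?q (Suc M) (\<lambda>T. exp (\<beta> * rademacher_sum (Suc M) T b))
      = iid_expect ?G ?q M (\<lambda>T. I * exp (\<beta> * rademacher_sum M T b))"
    by (simp add: iid_expect_Suc[OF finite_ghost_space[OF fin]] rademacher_sum_upd
        I_def distrib_left exp_add sum_distrib_right sum_distrib_left mult_ac)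
  also have "\<dots> \<le> exp (\<beta>\<^sup>2 / 2) * exp (real M * \<beta>\<^sup>2 / 2)"
    unfolding iid_expect_cmult I_def
    by (intro mult_mono ghost_sign_mgf_le[OF fin pnn p1 bnd] Suc.IH iid_expect_nonneg[OF q]) auto
  also have "\<dots> = exp (real (Suc M) * \<beta>\<^sup>2 / 2)"
    by (simp add: exp_add[symmetric] algebra_simps add_divide_distrib)
  finally show ?case .
qed

lemma exp_Max_linear_le:
  fixes v :: "'w \<Rightarrow> 'i \<Rightarrow> real" and B :: "'i \<Rightarrow> real"
  assumes W: "finite W" "W \<noteq> {}" and N: "finite N" "N \<noteq> {}" and R: "R \<ge> 0" and mu: "\<mu> \<ge> 0"
    and l1: "\<And>w. w \<in> W \<Longrightarrow> (\<Sum>i\<in>N. \<bar>v w i\<bar>) \<le> R"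
  shows "exp (\<mu> * Max ((\<lambda>w. \<Sum>i\<in>N. v w i * B i) ` W))
           \<le> (\<Sum>i\<in>N. exp (\<mu> * R * B i) + exp (- (\<mu> * R * B i)))"
proof -
  have "Max ((\<lambda>i. \<bar>B i\<bar>) ` N) \<in> (\<lambda>i. \<bar>B i\<bar>) ` N" using N by (intro Max_in) auto
  then obtain i0 where i0: "i0 \<in> N" "Max ((\<lambda>i. \<bar>B i\<bar>) ` N) = \<bar>B i0\<bar>" by auto
  have B: "\<bar>B i\<bar> \<le> \<bar>B i0\<bar>" if "i \<in> N" for i
    using i0 N that by (metis Max_ge finite_imageI imageI)
  have "(\<Sum>i\<in>N. v w i * B i) \<le> R * \<bar>B i0\<bar>" if "w \<in> W" for w
  proof -
    have "(\<Sum>i\<in>N. v w i * B i) \<le> (\<Sum>i\<in>N. \<bar>v w i\<bar> * \<bar>B i0\<bar>)"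
      using B by (intro sum_mono) (metis abs_ge_self abs_ge_zero abs_mult mult_left_mono order_trans)
    also have "\<dots> \<le> R * \<bar>B i0\<bar>"
      using l1[OF that] by (simp add: sum_distrib_right[symmetric] mult_right_mono)
    finally show ?thesis .
  qed
  then have "Max ((\<lambda>w. \<Sum>i\<in>N. v w i * B i) ` W) \<le> R * \<bar>B i0\<bar>"
    using W by (subst Max_le_iff) auto
  then have "exp (\<mu> * Max ((\<lambda>w. \<Sum>i\<in>N. v w i * B i) ` W)) \<le> exp (\<mu> * R * \<bar>B i0\<bar>)"
    using mult_left_mono[OF _ mu] by (simp add: mult.assoc)
  also have "\<dots> \<le> exp (\<mu> * R * B i0) + exp (- (\<mu> * R * B i0))"
    by (cases "B i0 \<ge> 0") (auto simp: add_pos_nonneg add_nonneg_pos)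
  also have "\<dots> \<le> (\<Sum>i\<in>N. exp (\<mu> * R * B i) + exp (- (\<mu> * R * B i)))"
    using i0 N by (intro member_le_sum) (auto intro: add_nonneg_nonneg)
  finally show ?thesis .
qed

lemma rademacher_linear_class_mgf_le:
  fixes v :: "'w \<Rightarrow> 'i \<Rightarrow> real" and ph :: "'i \<Rightarrow> 'a \<Rightarrow> 'a \<Rightarrow> real"
  assumes fin: "finite \<Omega>" and pnn: "\<And>x. x \<in> \<Omega> \<Longrightarrow> p x \<ge> 0" and p1: "sum p \<Omega> = 1"
    and W: "finite W" "W \<noteq> {}" and N: "finite N" "N \<noteq> {}" and R: "R \<ge> 0" and mu: "\<mu> \<ge> 0"
    and l1: "\<And>w. w \<in> W \<Longrightarrow> (\<Sum>i\<in>N. \<bar>v w i\<bar>) \<le> R"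
    and bnd: "\<And>i x x'. i \<in> N \<Longrightarrow> x \<in> \<Omega> \<Longrightarrow> x' \<in> \<Omega> \<Longrightarrow> \<bar>ph i x x'\<bar> \<le> 1"
  shows "iid_expect (ghost_space \<Omega>) (ghost_weight p) M
           (\<lambda>T. exp (\<mu> * Max ((\<lambda>w. rademacher_sum M T (\<lambda>x x'. \<Sum>i\<in>N. v w i * ph i x x')) ` W)))
     \<le> 2 * real (card N) * exp (real M * (\<mu> * R)\<^sup>2 / 2)"
proof -
  let ?G = "ghost_space \<Omega>" and ?q = "ghost_weight p"
  have q: "\<And>c. c \<in> ?G \<Longrightarrow> 0 \<le> ?q c" by (rule ghost_weight_nonneg[OF pnn])
  have lin: "rademacher_sum M T (\<lambda>x x'. \<Sum>i\<in>N. v w i * ph i x x') = (\<Sum>i\<in>N. v w i * rademacher_sum M T (ph i))"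
    for T w
    unfolding rademacher_sum_def by (simp add: sum_distrib_left mult_ac) (rule sum.swap)
  have neg: "- (c * rademacher_sum M T s) = c * rademacher_sum M T (\<lambda>x x'. - s x x')" for c T s
    by (simp add: rademacher_sum_def sum_negf)
  have "iid_expect ?G ?q M
           (\<lambda>T. exp (\<mu> * Max ((\<lambda>w. rademacher_sum M T (\<lambda>x x'. \<Sum>i\<in>N. v w i * ph i x x')) ` W)))
      \<le> iid_expect ?G ?q M (\<lambda>T. \<Sum>i\<in>N. exp (\<mu> * R * rademacher_sum M T (ph i))
                                     + exp (- (\<mu> * R * rademacher_sum M T (ph i))))"
    unfolding lin
  proof (rule iid_expect_mono)
    show "\<And>c. c \<in> ?G \<Longrightarrow> 0 \<le> ?q c" by (rule q)
  qed (rule exp_Max_linear_le[OF W N R mu l1])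
  also have "\<dots> = (\<Sum>i\<in>N. iid_expect ?G ?q M (\<lambda>T. exp (\<mu> * R * rademacher_sum M T (ph i)))
                   + iid_expect ?G ?q M (\<lambda>T. exp (\<mu> * R * rademacher_sum M T (\<lambda>x x'. - ph i x x'))))"
    by (simp only: neg iid_expect_sum iid_expect_add)
  also have "\<dots> \<le> (\<Sum>i\<in>N. exp (real M * (\<mu> * R)\<^sup>2 / 2) + exp (real M * (\<mu> * R)\<^sup>2 / 2))"
    using bnd by (intro sum_mono add_mono rademacher_sum_mgf_le[OF fin pnn p1]) auto
  also have "\<dots> = 2 * real (card N) * exp (real M * (\<mu> * R)\<^sup>2 / 2)" by simp
  finally show ?thesis .
qed

lemma rademacher_lipschitz_class_mgf_le:
  fixes v :: "'w \<Rightarrow> 'i \<Rightarrow> real" and ph :: "'i \<Rightarrow> 'a \<Rightarrow> 'a \<Rightarrow> real" and \<phi> :: "real \<Rightarrow> real"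
  assumes fin: "finite \<Omega>" and pnn: "\<And>x. x \<in> \<Omega> \<Longrightarrow> p x \<ge> 0" and p1: "sum p \<Omega> = 1"
    and W: "finite W" "W \<noteq> {}" and N: "finite N" "N \<noteq> {}" and R: "R \<ge> 0" and mu: "\<mu> \<ge> 0"
    and l1: "\<And>w. w \<in> W \<Longrightarrow> (\<Sum>i\<in>N. \<bar>v w i\<bar>) \<le> R"
    and bnd: "\<And>i x x'. i \<in> N \<Longrightarrow> x \<in> \<Omega> \<Longrightarrow> x' \<in> \<Omega> \<Longrightarrow> \<bar>ph i x x'\<bar> \<le> 1"
    and lip: "\<And>x y. \<bar>\<phi> x - \<phi> y\<bar> \<le> \<bar>x - y\<bar>" and phi0: "\<phi> 0 = 0"
  shows "iid_expect (ghost_space \<Omega>) (ghost_weight p) M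
           (\<lambda>T. exp (\<mu> * Max ((\<lambda>w. rademacher_sum M T (\<lambda>x x'. \<phi> (\<Sum>i\<in>N. v w i * ph i x x'))) ` W)))
     \<le> 2 * real (card N) * exp (real M * (\<mu> * R)\<^sup>2 / 2)"
proof -
  have "iid_expect (ghost_space \<Omega>) (ghost_weight p) M
          (\<lambda>T. exp (\<mu> * Max ((\<lambda>w. 0 + rademacher_sum M T (\<lambda>x x'. \<phi> (\<Sum>i\<in>N. v w i * ph i x x'))) ` W)))
      \<le> iid_expect (ghost_space \<Omega>) (ghost_weight p) M
          (\<lambda>T. exp (\<mu> * Max ((\<lambda>w. 0 + rademacher_sum M T (\<lambda>x x'. \<Sum>i\<in>N. v w i * ph i x x')) ` W)))"
    by (rule contraction[OF fin pnn W mu lip phi0])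
  also have "\<dots> \<le> 2 * real (card N) * exp (real M * (\<mu> * R)\<^sup>2 / 2)"
    using rademacher_linear_class_mgf_le[OF fin pnn p1 W N R mu l1 bnd] by simp
  finally show ?thesis by simp
qed

lemma exp_Max_add_le:
  fixes A B :: "'w \<Rightarrow> real"
  assumes "finite W" "W \<noteq> {}" and "\<mu> \<ge> 0"
  shows "exp (\<mu> * Max ((\<lambda>w. A w + B w) ` W))
           \<le> (exp (2 * \<mu> * Max (A ` W)) + exp (2 * \<mu> * Max (B ` W))) / 2"
proof -
  have "Max ((\<lambda>w. A w + B w) ` W) \<le> Max (A ` W) + Max (B ` W)"
    using assms by (subst Max_le_iff) (auto intro!: add_mono Max_ge)
  then have "\<mu> * Max ((\<lambda>w. A w + B w) ` W) \<le> \<mu> * (Max (A ` W) + Max (B ` W))"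
    using \<open>\<mu> \<ge> 0\<close> by (rule mult_left_mono)
  then have "exp (\<mu> * Max ((\<lambda>w. A w + B w) ` W)) \<le> exp (\<mu> * Max (A ` W)) * exp (\<mu> * Max (B ` W))"
    by (simp add: distrib_left flip: exp_add)
  also have "\<dots> \<le> ((exp (\<mu> * Max (A ` W)))\<^sup>2 + (exp (\<mu> * Max (B ` W)))\<^sup>2) / 2"
    using sum_squares_bound[of "exp (\<mu> * Max (A ` W))" "exp (\<mu> * Max (B ` W))"] by simp
  also have "\<dots> = (exp (2 * \<mu> * Max (A ` W)) + exp (2 * \<mu> * Max (B ` W))) / 2"
    by (simp add: exp_double[symmetric] mult.assoc)
  finally show ?thesis .
qed

lemma rademacher_lipschitz_difference_mgf_le:
  fixes v :: "'w \<Rightarrow> 'i \<Rightarrow> real" and ph :: "'i \<Rightarrow> 'a \<Rightarrow> real" and \<phi> :: "real \<Rightarrow> real"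
  assumes fin: "finite \<Omega>" and pnn: "\<And>x. x \<in> \<Omega> \<Longrightarrow> p x \<ge> 0" and p1: "sum p \<Omega> = 1"
    and W: "finite W" "W \<noteq> {}" and N: "finite N" "N \<noteq> {}" and R: "R \<ge> 0" and mu: "\<mu> \<ge> 0"
    and l1: "\<And>w. w \<in> W \<Longrightarrow> (\<Sum>i\<in>N. \<bar>v w i\<bar>) \<le> R"
    and bnd: "\<And>i x. i \<in> N \<Longrightarrow> x \<in> \<Omega> \<Longrightarrow> \<bar>ph i x\<bar> \<le> 1"
    and lip: "\<And>x y. \<bar>\<phi> x - \<phi> y\<bar> \<le> \<bar>x - y\<bar>" and phi0: "\<phi> 0 = 0"
  shows "iid_expect (ghost_space \<Omega>) (ghost_weight p) M (\<lambda>T. exp (\<mu> * Max ((\<lambda>w. rademacher_sum M T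
           (\<lambda>x x'. \<phi> (\<Sum>i\<in>N. v w i * ph i x') - \<phi> (\<Sum>i\<in>N. v w i * ph i x))) ` W)))
      \<le> 2 * real (card N) * exp (2 * real M * \<mu>\<^sup>2 * R\<^sup>2)"
proof -
  let ?G = "ghost_space \<Omega>" and ?q = "ghost_weight p"
  define A where "A T w = rademacher_sum M T (\<lambda>x x'. \<phi> (\<Sum>i\<in>N. v w i * ph i x'))" for T w
  define B where "B T w = rademacher_sum M T (\<lambda>x x'. - \<phi> (\<Sum>i\<in>N. v w i * ph i x))" for T w
  define K where "K = 2 * real (card N) * exp (real M * (2 * \<mu> * R)\<^sup>2 / 2)"
  have q: "\<And>c. c \<in> ?G \<Longrightarrow> 0 \<le> ?q c" by (rule ghost_weight_nonneg[OF pnn])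
  have split: "rademacher_sum M T (\<lambda>x x'. \<phi> (\<Sum>i\<in>N. v w i * ph i x') - \<phi> (\<Sum>i\<in>N. v w i * ph i x))
      = A T w + B T w" for T w
    unfolding A_def B_def rademacher_sum_def by (simp add: sum.distrib[symmetric] algebra_simps)
  have "iid_expect ?G ?q M (\<lambda>T. exp (\<mu> * Max ((\<lambda>w. A T w + B T w) ` W)))
      \<le> iid_expect ?G ?q M (\<lambda>T. (exp (2 * \<mu> * Max (A T ` W)) + exp (2 * \<mu> * Max (B T ` W))) / 2)"
  proof (rule iid_expect_mono)
    show "\<And>c. c \<in> ?G \<Longrightarrow> 0 \<le> ?q c" by (rule q)
  qed (rule exp_Max_add_le[OF W mu])
  also have "\<dots> = (iid_expect ?G ?q M (\<lambda>T. exp (2 * \<mu> * Max (A T ` W)))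
                  + iid_expect ?G ?q M (\<lambda>T. exp (2 * \<mu> * Max (B T ` W)))) / 2"
    by (simp only: iid_expect_divide iid_expect_add)
  also have "\<dots> \<le> (K + K) / 2"
  proof (intro divide_right_mono add_mono)
    show "iid_expect ?G ?q M (\<lambda>T. exp (2 * \<mu> * Max (A T ` W))) \<le> K"
      unfolding A_def K_def using mu bnd
      by (intro rademacher_lipschitz_class_mgf_le[OF fin pnn p1 W N R _ l1 _ lip phi0]) auto
    have lip': "\<bar>- \<phi> x - - \<phi> y\<bar> \<le> \<bar>x - y\<bar>" for x y
      using lip[of x y] by (simp add: abs_minus_commute)
    show "iid_expect ?G ?q M (\<lambda>T. exp (2 * \<mu> * Max (B T ` W))) \<le> K"
      unfolding B_def K_def using mu bnd phi0
      by (intro rademacher_lipschitz_class_mgf_le[OF fin pnn p1 W N R _ l1 _ lip']) auto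
  qed simp
  also have "\<dots> = 2 * real (card N) * exp (2 * real M * \<mu>\<^sup>2 * R\<^sup>2)"
    by (simp add: K_def power_mult_distrib)
  finally show ?thesis unfolding split .
qed

lemma uniform_deviation_mgf_le:
  fixes v :: "'w \<Rightarrow> 'i \<Rightarrow> real" and ph :: "'i \<Rightarrow> 'a \<Rightarrow> real" and \<phi> :: "real \<Rightarrow> real"
  assumes fin: "finite \<Omega>" and pnn: "\<And>x. x \<in> \<Omega> \<Longrightarrow> p x \<ge> 0" and p1: "sum p \<Omega> = 1"
    and W: "finite W" "W \<noteq> {}" and N: "finite N" "N \<noteq> {}" and R: "R \<ge> 0" and mu: "\<mu> \<ge> 0"
    and l1: "\<And>w. w \<in> W \<Longrightarrow> (\<Sum>i\<in>N. \<bar>v w i\<bar>) \<le> R"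
    and bnd: "\<And>i x. i \<in> N \<Longrightarrow> x \<in> \<Omega> \<Longrightarrow> \<bar>ph i x\<bar> \<le> 1"
    and lip: "\<And>x y. \<bar>\<phi> x - \<phi> y\<bar> \<le> \<bar>x - y\<bar>" and phi0: "\<phi> 0 = 0"
    and om: "\<And>S. S \<in> PiE {..<M} (\<lambda>_. \<Omega>) \<Longrightarrow> \<omega> S \<in> W"
  shows "iid_expect \<Omega> p M (\<lambda>S. exp (\<mu> * centered_sum \<Omega> p M (\<lambda>x. \<phi> (\<Sum>i\<in>N. v (\<omega> S) i * ph i x)) S))
      \<le> 2 * real (card N) * exp (2 * real M * \<mu>\<^sup>2 * R\<^sup>2)"
proof -
  define l where "l w x = \<phi> (\<Sum>i\<in>N. v w i * ph i x)" for w x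
  have "iid_expect \<Omega> p M (\<lambda>S. exp (\<mu> * centered_sum \<Omega> p M (l (\<omega> S)) S))
      \<le> iid_expect \<Omega> p M (\<lambda>S. exp (\<mu> * Max ((\<lambda>w. 0 + centered_sum \<Omega> p M (l w) S) ` W)))"
  proof (rule iid_expect_mono[OF pnn])
    fix S assume "S \<in> PiE {..<M} (\<lambda>_. \<Omega>)"
    then have "centered_sum \<Omega> p M (l (\<omega> S)) S \<le> Max ((\<lambda>w. 0 + centered_sum \<Omega> p M (l w) S) ` W)"
      using om W by (intro Max_ge) auto
    then show "exp (\<mu> * centered_sum \<Omega> p M (l (\<omega> S)) S)
        \<le> exp (\<mu> * Max ((\<lambda>w. 0 + centered_sum \<Omega> p M (l w) S) ` W))"
      using mult_left_mono[OF _ mu] by simp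
  qed
  also have "\<dots> \<le> iid_expect (ghost_space \<Omega>) (ghost_weight p) M
      (\<lambda>T. exp (\<mu> * Max ((\<lambda>w. 0 + rademacher_sum M T (\<lambda>x x'. l w x' - l w x)) ` W)))"
    by (rule symmetrization[OF fin pnn p1 W mu])
  also have "\<dots> \<le> 2 * real (card N) * exp (2 * real M * \<mu>\<^sup>2 * R\<^sup>2)"
    using rademacher_lipschitz_difference_mgf_le[OF fin pnn p1 W N R mu l1 bnd lip phi0]
    by (simp add: l_def)
  finally show ?thesis unfolding l_def .
qed

lemma uniform_deviation_tail_le:
  fixes v :: "'w \<Rightarrow> 'i \<Rightarrow> real" and ph :: "'i \<Rightarrow> 'a \<Rightarrow> real" and \<phi> :: "real \<Rightarrow> real"
  assumes fin: "finite \<Omega>" and pnn: "\<And>x. x \<in> \<Omega> \<Longrightarrow> p x \<ge> 0" and p1: "sum p \<Omega> = 1"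
    and W: "finite W" "W \<noteq> {}" and N: "finite N" "N \<noteq> {}" and R: "R > 0" and t: "t \<ge> 0"
    and l1: "\<And>w. w \<in> W \<Longrightarrow> (\<Sum>i\<in>N. \<bar>v w i\<bar>) \<le> R"
    and bnd: "\<And>i x. i \<in> N \<Longrightarrow> x \<in> \<Omega> \<Longrightarrow> \<bar>ph i x\<bar> \<le> 1"
    and lip: "\<And>x y. \<bar>\<phi> x - \<phi> y\<bar> \<le> \<bar>x - y\<bar>" and phi0: "\<phi> 0 = 0"
    and om: "\<And>S. S \<in> PiE {..<M} (\<lambda>_. \<Omega>) \<Longrightarrow> \<omega> S \<in> W"
  shows "iid_expect \<Omega> p M (\<lambda>S. if real M * t \<le> centered_sum \<Omega> p M (\<lambda>x. \<phi> (\<Sum>i\<in>N. v (\<omega> S) i * ph i x)) S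
                               then 1 else 0)
           \<le> 2 * real (card N) * exp (- (real M * t\<^sup>2 / (8 * R\<^sup>2)))"
proof -
  define \<mu> where "\<mu> = t / (4 * R\<^sup>2)" \<comment> \<open>the optimal Chernoff parameter\<close>
  have mu: "\<mu> \<ge> 0" using t by (simp add: \<mu>_def)
  have "iid_expect \<Omega> p M (\<lambda>S. if real M * t \<le> centered_sum \<Omega> p M (\<lambda>x. \<phi> (\<Sum>i\<in>N. v (\<omega> S) i * ph i x)) S
                               then 1 else 0)
      \<le> exp (- \<mu> * (real M * t)) *
        iid_expect \<Omega> p M (\<lambda>S. exp (\<mu> * centered_sum \<Omega> p M (\<lambda>x. \<phi> (\<Sum>i\<in>N. v (\<omega> S) i * ph i x)) S))"
    by (rule iid_expect_tail_le[OF pnn mu])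
  also have "\<dots> \<le> exp (- \<mu> * (real M * t)) * (2 * real (card N) * exp (2 * real M * \<mu>\<^sup>2 * R\<^sup>2))"
    using R by (intro mult_left_mono uniform_deviation_mgf_le[OF fin pnn p1 W N _ mu l1 bnd lip phi0 om]) auto
  also have "\<dots> = 2 * real (card N) * exp (- \<mu> * (real M * t) + 2 * real M * \<mu>\<^sup>2 * R\<^sup>2)"
    by (simp add: algebra_simps flip: exp_add)
  also have "- \<mu> * (real M * t) + 2 * real M * \<mu>\<^sup>2 * R\<^sup>2 = - (real M * t\<^sup>2 / (8 * R\<^sup>2))"
    using R by (simp add: \<mu>_def field_simps power2_eq_square)
  finally show ?thesis .
qed

section \<open>The logistic loss\<close>

definition logistic_loss :: "real \<Rightarrow> real" where
  "logistic_loss t = ln (1 + exp (- t))"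

lemma logistic_loss_zero [simp]: "logistic_loss 0 = ln 2"
  by (simp add: logistic_loss_def)

text \<open>The Kullback--Leibler divergence of the Bernoulli law with logit \<open>F\<close> from the one with
  logit \<open>a\<close>, using \<open>- ln (sigmoid t) = logistic_loss t\<close>.\<close>

definition bernoulli_kl :: "real \<Rightarrow> real \<Rightarrow> real" where
  "bernoulli_kl a F = sigmoid a * (logistic_loss F - logistic_loss a)
                      + sigmoid (- a) * (logistic_loss (- F) - logistic_loss (- a))"

lemma one_plus_exp_pos: "(0::real) < 1 + exp t"
  by (simp add: add_pos_pos)

lemma sigmoid_pos: "0 < sigmoid t"
  by (simp add: sigmoid_def one_plus_exp_pos)

lemma sigmoid_less_1: "sigmoid t < 1"
  by (simp add: sigmoid_def one_plus_exp_pos)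

lemma sigmoid_minus: "sigmoid (- t) = 1 - sigmoid t"
  using one_plus_exp_pos[of t] one_plus_exp_pos[of "- t"]
  by (simp add: sigmoid_def field_simps exp_minus)

lemma logistic_loss_eq_minus_ln_sigmoid: "logistic_loss t = - ln (sigmoid t)"
  using one_plus_exp_pos[of "- t"] by (simp add: logistic_loss_def sigmoid_def ln_div)

lemma sigmoid_mono: "a \<le> b \<Longrightarrow> sigmoid a \<le> sigmoid b"
  unfolding sigmoid_def by (rule divide_left_mono) (auto intro!: mult_pos_pos one_plus_exp_pos)

lemma sigmoid_variance_le: "sigmoid t * (1 - sigmoid t) \<le> 1 / 4"
  using mult_const_minus_self_real_le[of "sigmoid t" 1] by simp

lemma inverse_sigmoid_variance: "1 / (sigmoid t * (1 - sigmoid t)) = 2 + exp t + exp (- t)"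
proof -
  have "sigmoid t * (1 - sigmoid t) = exp (- t) / (1 + exp (- t))\<^sup>2"
    using one_plus_exp_pos[of "- t"] by (simp add: sigmoid_def field_simps power2_eq_square)
  then have "1 / (sigmoid t * (1 - sigmoid t)) = (1 + exp (- t))\<^sup>2 / exp (- t)" by simp
  also have "\<dots> = 2 + exp t + exp (- t)"
    by (simp add: power2_eq_square field_simps exp_minus)
  finally show ?thesis .
qed

lemma DERIV_sigmoid: "DERIV sigmoid t :> sigmoid t * (1 - sigmoid t)"
proof -
  have "DERIV sigmoid t :> exp (- t) / (1 + exp (- t))\<^sup>2"
    unfolding sigmoid_def using one_plus_exp_pos[of "- t"]
    by (auto intro!: derivative_eq_intros simp: power2_eq_square field_simps)
  moreover have "exp (- t) / (1 + exp (- t))\<^sup>2 = sigmoid t * (1 - sigmoid t)"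
    using one_plus_exp_pos[of "- t"] by (simp add: sigmoid_def field_simps power2_eq_square)
  ultimately show ?thesis by simp
qed

lemma DERIV_logistic_loss: "DERIV logistic_loss t :> sigmoid t - 1"
proof -
  have "DERIV logistic_loss t :> - exp (- t) / (1 + exp (- t))"
    unfolding logistic_loss_def using one_plus_exp_pos[of "- t"]
    by (auto intro!: derivative_eq_intros simp: field_simps)
  moreover have "- exp (- t) / (1 + exp (- t)) = sigmoid t - 1"
    using one_plus_exp_pos[of "- t"] by (simp add: sigmoid_def field_simps)
  ultimately show ?thesis by simp
qed

lemma DERIV_bernoulli_kl: "DERIV (bernoulli_kl a) t :> sigmoid t - sigmoid a"
proof -
  have mirror: "DERIV (\<lambda>t. logistic_loss (- t)) t :> (sigmoid (- t) - 1) * - 1"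
    by (rule DERIV_chain2[OF DERIV_logistic_loss]) (auto intro!: derivative_eq_intros)
  have "DERIV (bernoulli_kl a) t :>
      sigmoid a * (sigmoid t - 1 - 0) + sigmoid (- a) * ((sigmoid (- t) - 1) * - 1 - 0)"
    unfolding bernoulli_kl_def by (intro DERIV_add DERIV_cmult DERIV_diff DERIV_logistic_loss DERIV_const mirror)
  then show ?thesis by (simp add: sigmoid_minus algebra_simps)
qed

lemma lipschitz_of_DERIV_bound:
  fixes f f' :: "real \<Rightarrow> real"
  assumes "\<And>t. DERIV f t :> f' t" and "\<And>t. \<bar>f' t\<bar> \<le> L"
  shows "\<bar>f a - f b\<bar> \<le> L * \<bar>a - b\<bar>"
  using field_differentiable_bound[OF convex_UNIV, of f f' L a b] assms by simp

lemma sigmoid_lipschitz: "\<bar>sigmoid a - sigmoid b\<bar> \<le> \<bar>a - b\<bar> / 4"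
proof -
  have "\<bar>sigmoid t * (1 - sigmoid t)\<bar> \<le> 1 / 4" for t
    using sigmoid_variance_le[of t] sigmoid_pos[of t] sigmoid_less_1[of t] by simp
  from lipschitz_of_DERIV_bound[OF DERIV_sigmoid this] show ?thesis by simp
qed

lemma logistic_loss_lipschitz: "\<bar>logistic_loss a - logistic_loss b\<bar> \<le> \<bar>a - b\<bar>"
proof -
  have "\<bar>sigmoid t - 1\<bar> \<le> 1" for t
    using sigmoid_pos[of t] sigmoid_less_1[of t] by simp
  from lipschitz_of_DERIV_bound[OF DERIV_logistic_loss this] show ?thesis by simp
qed

text \<open>The gap \<open>bernoulli_kl a F - 2 (sigmoid a - sigmoid F)\<^sup>2\<close>
  has derivative \<open>(sigmoid F - sigmoid a) (1 - 4 sigmoid F (1 - sigmoid F))\<close> in \<open>F\<close>, which has the sign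
  of \<open>F - a\<close>; hence the gap is minimal, namely zero, at \<open>F = a\<close>.\<close>

lemma bernoulli_kl_ge_pinsker: "2 * (sigmoid a - sigmoid F)\<^sup>2 \<le> bernoulli_kl a F"
proof -
  define gap where "gap F = bernoulli_kl a F - 2 * ((sigmoid a - sigmoid F) * (sigmoid a - sigmoid F))" for F
  define gap' where "gap' F = (sigmoid F - sigmoid a) * (1 - 4 * (sigmoid F * (1 - sigmoid F)))" for F
  have dgap: "DERIV gap t :> gap' t" for t
  proof -
    have "DERIV (\<lambda>F. (sigmoid a - sigmoid F) * (sigmoid a - sigmoid F)) t :>
        (0 - sigmoid t * (1 - sigmoid t)) * (sigmoid a - sigmoid t)
        + (0 - sigmoid t * (1 - sigmoid t)) * (sigmoid a - sigmoid t)"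
      by (intro DERIV_mult DERIV_diff DERIV_const DERIV_sigmoid)
    then have "DERIV gap t :> (sigmoid t - sigmoid a) - 2 * ((0 - sigmoid t * (1 - sigmoid t)) * (sigmoid a - sigmoid t)
        + (0 - sigmoid t * (1 - sigmoid t)) * (sigmoid a - sigmoid t))"
      unfolding gap_def by (intro DERIV_diff DERIV_bernoulli_kl DERIV_cmult)
    then show ?thesis by (simp add: gap'_def algebra_simps)
  qed
  have factor: "1 - 4 * (sigmoid t * (1 - sigmoid t)) \<ge> 0" for t
    using sigmoid_variance_le[of t] by simp
  have "gap a \<le> gap F"
  proof (cases "a \<le> F")
    case True
    show ?thesis
    proof (rule DERIV_nonneg_imp_nondecreasing[of a F gap, OF True])
      fix t assume "a \<le> t"
      then have "gap' t \<ge> 0" using sigmoid_mono factor[of t] by (simp add: gap'_def)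
      then show "\<exists>y. DERIV gap t :> y \<and> y \<ge> 0" using dgap by blast
    qed
  next
    case False
    show ?thesis
    proof (rule DERIV_nonpos_imp_nonincreasing[of F a gap])
      show "F \<le> a" using False by simp
      fix t assume "t \<le> a"
      then have "gap' t \<le> 0" using sigmoid_mono factor[of t] by (simp add: gap'_def mult_nonpos_nonneg)
      then show "\<exists>y. DERIV gap t :> y \<and> y \<le> 0" using dgap by blast
    qed
  qed
  moreover have "gap a = 0" by (simp add: gap_def bernoulli_kl_def)
  ultimately show ?thesis by (simp add: gap_def power2_eq_square)
qed

lemma bernoulli_kl_le_chi_square:
  "bernoulli_kl a F \<le> (sigmoid a - sigmoid F)\<^sup>2 * (2 + exp F + exp (- F))"
proof -
  define p where "p = sigmoid a"
  define q where "q = sigmoid F"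
  have p: "0 < p" "p < 1" and q: "0 < q" "q < 1"
    using sigmoid_pos sigmoid_less_1 by (auto simp: p_def q_def)
  have "bernoulli_kl a F = p * (ln p - ln q) + (1 - p) * (ln (1 - p) - ln (1 - q))"
    by (simp add: bernoulli_kl_def logistic_loss_eq_minus_ln_sigmoid sigmoid_minus p_def q_def)
  also have "\<dots> \<le> p * ((p - q) / q) + (1 - p) * (((1 - p) - (1 - q)) / (1 - q))"
    using p q by (intro add_mono mult_left_mono ln_diff_le) auto
  also have "\<dots> = (p - q)\<^sup>2 / (q * (1 - q))"
    using p q by (simp add: field_simps power2_eq_square)
  also have "\<dots> = (p - q)\<^sup>2 * (1 / (q * (1 - q)))" by simp
  finally show ?thesis by (simp only: p_def q_def inverse_sigmoid_variance)
qed

section \<open>The marginal of the observed layer\<close>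

lemma bij_betw_PiE_cube:
  "bij_betw (\<lambda>f i. if i < n then f i else 0) (PiE {..<n} (\<lambda>_. {1, -1})) (cube n)"
proof (rule bij_betwI[where g = "\<lambda>y. restrict y {..<n}"])
  show "(\<lambda>f i. if i < n then f i else 0) \<in> PiE {..<n} (\<lambda>_. {1, -1}) \<rightarrow> cube n"
    by (auto simp: cube_def PiE_def Pi_def)
  show "(\<lambda>y. restrict y {..<n}) \<in> cube n \<rightarrow> PiE {..<n} (\<lambda>_. {1, -1})"
    by (auto simp: cube_def)
  show "restrict (\<lambda>i. if i < n then f i else 0) {..<n} = f" if "f \<in> PiE {..<n} (\<lambda>_. {1, -1})" for f
    using that by (auto simp: restrict_def PiE_def extensional_def fun_eq_iff)
  show "(\<lambda>i. if i < n then restrict y {..<n} i else 0) = y" if "y \<in> cube n" for y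
    using that by (auto simp: cube_def fun_eq_iff)
qed

lemma finite_cube: "finite (cube n)"
  using bij_betw_finite[OF bij_betw_PiE_cube[of n]] by (simp add: finite_PiE)

lemma cube_coord: "x \<in> cube n \<Longrightarrow> i < n \<Longrightarrow> x i = 1 \<or> x i = -1"
  by (simp add: cube_def)

lemma fun_upd_in_cube: "x \<in> cube n \<Longrightarrow> u < n \<Longrightarrow> v = 1 \<or> v = -1 \<Longrightarrow> x(u := v) \<in> cube n"
  by (auto simp: cube_def)

lemma abs_chi_cube: "x \<in> cube n \<Longrightarrow> T \<subseteq> {..<n} \<Longrightarrow> \<bar>chi T x\<bar> = 1"
  unfolding chi_def abs_prod by (rule prod.neutral) (use cube_coord in fastforce)

lemma chi_fun_upd_notin: "u \<notin> T \<Longrightarrow> chi T (x(u := v)) = chi T x"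
  unfolding chi_def by (intro prod.cong) auto

lemma chi_fun_upd_in: "finite T \<Longrightarrow> u \<in> T \<Longrightarrow> chi T (x(u := v)) = v * chi (T - {u}) x"
  unfolding chi_def by (simp add: prod.remove)

lemma sum_cube_prod:
  fixes G :: "nat \<Rightarrow> real \<Rightarrow> real"
  shows "(\<Sum>y\<in>cube m. \<Prod>j<m. G j (y j)) = (\<Prod>j<m. G j 1 + G j (-1))"
proof -
  have "(\<Sum>y\<in>cube m. \<Prod>j<m. G j (y j)) = (\<Sum>f\<in>PiE {..<m} (\<lambda>_. {1, -1}). \<Prod>j<m. G j (f j))"
    by (subst sum.reindex_bij_betw[OF bij_betw_PiE_cube, symmetric]) (auto intro!: sum.cong prod.cong)
  also have "\<dots> = (\<Prod>j<m. \<Sum>v\<in>{1, -1}. G j v)"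
    by (rule prod_sum_PiE[symmetric]) auto
  finally show ?thesis by simp
qed

text \<open>Summing out the hidden layer: each hidden unit contributes \<open>exp (rho (J\<^sub>j \<cdot> x + g\<^sub>j))\<close>.\<close>

lemma rbm_weight_eq_exp_rbm_f: "rbm_weight n m J h g x = exp (rbm_f n m J h g x)"
proof -
  define c where "c j = (\<Sum>i<n. J i j * x i) + g j" for j
  have "rbm_weight n m J h g x = (\<Sum>y\<in>cube m. exp (\<Sum>i<n. h i * x i) * (\<Prod>j<m. exp (y j * c j)))"
    unfolding rbm_weight_def
  proof (rule sum.cong[OF refl])
    fix y
    have "(\<Sum>i<n. \<Sum>j<m. x i * J i j * y j) = (\<Sum>j<m. y j * (\<Sum>i<n. J i j * x i))"
      by (subst sum.swap) (simp add: sum_distrib_left mult_ac)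
    then have "(\<Sum>i<n. \<Sum>j<m. x i * J i j * y j) + (\<Sum>i<n. h i * x i) + (\<Sum>j<m. g j * y j)
        = (\<Sum>i<n. h i * x i) + (\<Sum>j<m. y j * c j)"
      unfolding c_def by (simp add: distrib_left sum.distrib mult_ac)
    then have "exp ((\<Sum>i<n. \<Sum>j<m. x i * J i j * y j) + (\<Sum>i<n. h i * x i) + (\<Sum>j<m. g j * y j))
        = exp ((\<Sum>i<n. h i * x i) + (\<Sum>j<m. y j * c j))"
      by simp
    also have "\<dots> = exp (\<Sum>i<n. h i * x i) * (\<Prod>j<m. exp (y j * c j))"
      by (simp add: exp_add exp_sum)
    finally show "exp ((\<Sum>i<n. \<Sum>j<m. x i * J i j * y j) + (\<Sum>i<n. h i * x i) + (\<Sum>j<m. g j * y j))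
        = exp (\<Sum>i<n. h i * x i) * (\<Prod>j<m. exp (y j * c j))" .
  qed
  also have "\<dots> = exp (\<Sum>i<n. h i * x i) * (\<Prod>j<m. exp (c j) + exp (- c j))"
    using sum_cube_prod[of "\<lambda>j v. exp (v * c j)" m] by (simp add: sum_distrib_left[symmetric])
  also have "(\<Prod>j<m. exp (c j) + exp (- c j)) = exp (\<Sum>j<m. rho (c j))"
    by (simp add: exp_sum rho_def add_pos_pos)
  finally show ?thesis by (simp add: rbm_f_def c_def exp_add[symmetric] add.commute)
qed

definition rbm_partition :: "nat \<Rightarrow> nat \<Rightarrow> (nat \<Rightarrow> nat \<Rightarrow> real) \<Rightarrow> (nat \<Rightarrow> real) \<Rightarrow> (nat \<Rightarrow> real) \<Rightarrow> real" where
  "rbm_partition n m J h g = (\<Sum>x\<in>cube n. rbm_weight n m J h g x)"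

lemma rbm_partition_pos: "rbm_partition n m J h g > 0"
proof -
  have "(\<lambda>i. if i < n then 1 else 0) \<in> cube n" by (simp add: cube_def)
  then show ?thesis
    unfolding rbm_partition_def rbm_weight_eq_exp_rbm_f
    by (intro sum_pos2[OF finite_cube]) auto
qed

lemma rbm_marginal_eq: "rbm_marginal n m J h g x = exp (rbm_f n m J h g x) / rbm_partition n m J h g"
  by (simp add: rbm_marginal_def rbm_partition_def rbm_weight_eq_exp_rbm_f)

lemma rbm_marginal_pos: "rbm_marginal n m J h g x > 0"
  using rbm_partition_pos[of n m J h g] by (simp add: rbm_marginal_eq)

lemma sum_rbm_marginal: "(\<Sum>x\<in>cube n. rbm_marginal n m J h g x) = 1"
  using rbm_partition_pos[of n m J h g]
  by (simp add: rbm_marginal_def rbm_partition_def flip: sum_divide_distrib)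

definition rbm_logit :: "nat \<Rightarrow> nat \<Rightarrow> (nat \<Rightarrow> nat \<Rightarrow> real) \<Rightarrow> (nat \<Rightarrow> real) \<Rightarrow> (nat \<Rightarrow> real)
    \<Rightarrow> nat \<Rightarrow> (nat \<Rightarrow> real) \<Rightarrow> real" where
  "rbm_logit n m J h g u x = rbm_f n m J h g (x(u := 1)) - rbm_f n m J h g (x(u := -1))"

lemma cond_prob_one_eq_sigmoid: "cond_prob_one n m J h g u x = sigmoid (rbm_logit n m J h g u x)"
proof -
  define Z where "Z = rbm_partition n m J h g"
  define A where "A = rbm_f n m J h g (x(u := 1))"
  define B where "B = rbm_f n m J h g (x(u := -1))"
  have "cond_prob_one n m J h g u x = (exp A / Z) / (exp A / Z + exp B / Z)"
    by (simp only: cond_prob_one_def rbm_marginal_eq Z_def A_def B_def)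
  also have "\<dots> = exp A / (exp A + exp B)"
    using rbm_partition_pos[of n m J h g] by (simp add: Z_def field_simps)
  also have "\<dots> = sigmoid (A - B)"
    by (simp add: sigmoid_def exp_diff field_simps exp_minus)
  finally show ?thesis by (simp add: rbm_logit_def A_def B_def)
qed

lemma sum_chi_mult_chi:
  assumes x: "x \<in> cube n" and y: "y \<in> cube n"
  shows "(\<Sum>T\<in>Pow {..<n}. chi T y * chi T x) = (if y = x then 2 ^ n else 0)"
proof -
  have "(\<Sum>T\<in>Pow {..<n}. chi T y * chi T x) = (\<Sum>T\<in>Pow {..<n}. (\<Prod>i\<in>T. y i * x i) * (\<Prod>i\<in>{..<n} - T. 1))"
    by (simp add: chi_def prod.distrib)
  also have "\<dots> = (\<Prod>i<n. y i * x i + 1)"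
    by (rule prod_add[symmetric]) simp
  also have "\<dots> = (if y = x then 2 ^ n else 0)"
  proof (cases "y = x")
    case True
    have "(\<Prod>i<n. y i * x i + 1) = (\<Prod>i<n. 2)"
      using True cube_coord[OF x] by (intro prod.cong) fastforce+
    then show ?thesis using True by simp
  next
    case False
    then obtain i where i: "y i \<noteq> x i" by auto
    have "i < n"
    proof (rule ccontr)
      assume "\<not> i < n"
      with x y have "x i = 0" "y i = 0" by (auto simp: cube_def)
      with i show False by simp
    qed
    with i have "y i * x i + 1 = 0" using cube_coord[OF x] cube_coord[OF y] by fastforce
    with \<open>i < n\<close> False show ?thesis by (auto simp: prod_zero_iff)
  qed
  finally show ?thesis .
qed

lemma fourier_inversion:
  assumes x: "x \<in> cube n"
  shows "F x = (\<Sum>T\<in>Pow {..<n}. fourier_coeff n F T * chi T x)"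
proof -
  have "(\<Sum>T\<in>Pow {..<n}. fourier_coeff n F T * chi T x)
      = (\<Sum>y\<in>cube n. F y * (\<Sum>T\<in>Pow {..<n}. chi T y * chi T x) / 2 ^ n)"
    unfolding fourier_coeff_def
    by (simp add: sum_divide_distrib sum_distrib_left sum_distrib_right mult_ac) (rule sum.swap)
  also have "\<dots> = (\<Sum>y\<in>cube n. if y = x then F x else 0)"
    by (intro sum.cong refl) (simp add: sum_chi_mult_chi[OF x])
  also have "\<dots> = F x"
    using x finite_cube by simp
  finally show ?thesis by simp
qed

definition sets_through :: "nat \<Rightarrow> nat \<Rightarrow> nat set set" where
  "sets_through n u = {T. T \<subseteq> {..<n} \<and> u \<in> T}"

lemma finite_sets_through: "finite (sets_through n u)"
  by (rule finite_subset[of _ "Pow {..<n}"]) (auto simp: sets_through_def)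

lemma fourier_flip_difference:
  assumes u: "u < n" and x: "x \<in> cube n"
  shows "F (x(u := 1)) - F (x(u := -1)) = 2 * (\<Sum>T\<in>sets_through n u. fourier_coeff n F T * chi (T - {u}) x)"
proof -
  have fin: "finite T" if "T \<in> Pow {..<n}" for T using that finite_subset by blast
  have "F (x(u := 1)) - F (x(u := -1))
      = (\<Sum>T\<in>Pow {..<n}. fourier_coeff n F T * (chi T (x(u := 1)) - chi T (x(u := -1))))"
    using fourier_inversion[OF fun_upd_in_cube[OF x u], of _ F]
    by (simp add: sum_subtractf[symmetric] algebra_simps)
  also have "\<dots> = (\<Sum>T\<in>Pow {..<n}. if u \<in> T then 2 * (fourier_coeff n F T * chi (T - {u}) x) else 0)"
    by (intro sum.cong refl) (auto simp: chi_fun_upd_in chi_fun_upd_notin fin)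
  also have "\<dots> = 2 * (\<Sum>T\<in>sets_through n u. fourier_coeff n F T * chi (T - {u}) x)"
    by (simp add: sum.inter_filter[symmetric] sum_distrib_left sets_through_def conj_commute)
  finally show ?thesis .
qed

section \<open>Logistic regression at one node\<close>

text \<open>The comparison weights: by \<open>fourier_flip_difference\<close> their feature map is the part of the logit
  at \<open>u\<close> carried by the Fourier sets inside the neighbourhood \<open>N\<close>.\<close>

definition fourier_weights :: "nat \<Rightarrow> ((nat \<Rightarrow> real) \<Rightarrow> real) \<Rightarrow> nat \<Rightarrow> nat set \<Rightarrow> real" where
  "fourier_weights n F u T = 2 * fourier_coeff n F (insert u T)"

lemma sum_sets_through_within:
  assumes "u < n" "u \<notin> N" "N \<subseteq> {..<n}"
  shows "(\<Sum>T\<in>{T\<in>sets_through n u. T - {u} \<subseteq> N}. G T) = (\<Sum>T\<in>Pow N. G (insert u T))"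
proof -
  have "bij_betw (insert u) (Pow N) {T\<in>sets_through n u. T - {u} \<subseteq> N}"
  proof (rule bij_betw_imageI)
    show "inj_on (insert u) (Pow N)" using assms(2) by (auto simp: inj_on_def)
    show "insert u ` Pow N = {T\<in>sets_through n u. T - {u} \<subseteq> N}"
    proof
      show "insert u ` Pow N \<subseteq> {T\<in>sets_through n u. T - {u} \<subseteq> N}"
        using assms by (auto simp: sets_through_def)
      show "{T\<in>sets_through n u. T - {u} \<subseteq> N} \<subseteq> insert u ` Pow N"
      proof
        fix T assume "T \<in> {T\<in>sets_through n u. T - {u} \<subseteq> N}"
        then have "T = insert u (T - {u})" "T - {u} \<in> Pow N" by (auto simp: sets_through_def)
        then show "T \<in> insert u ` Pow N" by blast
      qed
    qed
  qed
  then show ?thesis by (simp add: sum.reindex_bij_betw)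
qed

lemma feat_dot_fourier_weights:
  assumes "u < n" "u \<notin> N" "N \<subseteq> {..<n}"
  shows "feat_dot N (fourier_weights n F u) x
           = 2 * (\<Sum>T\<in>{T\<in>sets_through n u. T - {u} \<subseteq> N}. fourier_coeff n F T * chi (T - {u}) x)"
proof -
  have "insert u T - {u} = T" if "T \<in> Pow N" for T using that assms(2) by auto
  then show ?thesis
    by (simp add: sum_sets_through_within[OF assms] feat_dot_def fourier_weights_def sum_distrib_left mult_ac)
qed

lemma l1_norm_fourier_weights_le:
  assumes "u < n" "u \<notin> N" "N \<subseteq> {..<n}"
  shows "l1_norm N (fourier_weights n F u) \<le> 2 * (\<Sum>T\<in>sets_through n u. \<bar>fourier_coeff n F T\<bar>)"
proof -
  have "l1_norm N (fourier_weights n F u) = 2 * (\<Sum>T\<in>{T\<in>sets_through n u. T - {u} \<subseteq> N}. \<bar>fourier_coeff n F T\<bar>)"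
    by (simp add: l1_norm_def fourier_weights_def sum_sets_through_within[OF assms] abs_mult sum_distrib_left)
  also have "\<dots> \<le> 2 * (\<Sum>T\<in>sets_through n u. \<bar>fourier_coeff n F T\<bar>)"
    by (simp add: sum_mono2[OF finite_sets_through])
  finally show ?thesis .
qed

lemma logit_truncation_error:
  assumes u: "u < n" "u \<notin> N" "N \<subseteq> {..<n}" and x: "x \<in> cube n" and "\<zeta> \<ge> 0"
    and small: "\<And>T. T \<in> sets_through n u \<Longrightarrow> \<not> T - {u} \<subseteq> N \<Longrightarrow> \<bar>fourier_coeff n F T\<bar> \<le> \<zeta>"
  shows "\<bar>F (x(u := 1)) - F (x(u := -1)) - feat_dot N (fourier_weights n F u) x\<bar>
           \<le> 2 * \<zeta> * real (card {T\<in>sets_through n u. fourier_coeff n F T \<noteq> 0})"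
proof -
  let ?c = "fourier_coeff n F"
  define G where "G = {T\<in>sets_through n u. T - {u} \<subseteq> N}"
  define B where "B = {T\<in>sets_through n u. \<not> T - {u} \<subseteq> N}"
  have split: "sets_through n u = G \<union> B" "G \<inter> B = {}" by (auto simp: G_def B_def)
  have fin: "finite G" "finite B" using finite_sets_through[of n u] by (auto simp: G_def B_def)
  have "F (x(u := 1)) - F (x(u := -1)) - feat_dot N (fourier_weights n F u) x
      = 2 * (\<Sum>T\<in>B. ?c T * chi (T - {u}) x)"
  proof -
    have "feat_dot N (fourier_weights n F u) x = 2 * (\<Sum>T\<in>G. ?c T * chi (T - {u}) x)"
      using feat_dot_fourier_weights[OF u] by (simp add: G_def)
    then show ?thesis
      unfolding fourier_flip_difference[OF u(1) x] split(1) by (simp add: sum.union_disjoint[OF fin split(2)])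
  qed
  moreover have "\<bar>\<Sum>T\<in>B. ?c T * chi (T - {u}) x\<bar> \<le> (\<Sum>T\<in>B. \<bar>?c T\<bar>)"
  proof -
    have "\<bar>chi (T - {u}) x\<bar> = 1" if "T \<in> B" for T
      using that by (intro abs_chi_cube[OF x]) (auto simp: B_def sets_through_def)
    then show ?thesis
      using sum_abs[of "\<lambda>T. ?c T * chi (T - {u}) x" B] by (simp add: abs_mult)
  qed
  moreover have "(\<Sum>T\<in>B. \<bar>?c T\<bar>) = (\<Sum>T\<in>{T\<in>B. ?c T \<noteq> 0}. \<bar>?c T\<bar>)"
    using fin(2) by (intro sum.mono_neutral_right) auto
  moreover have "\<dots> \<le> real (card {T\<in>B. ?c T \<noteq> 0}) * \<zeta>"
    using small by (intro sum_bounded_above) (auto simp: B_def)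
  moreover have card_le: "card {T\<in>B. ?c T \<noteq> 0} \<le> card {T\<in>sets_through n u. ?c T \<noteq> 0}"
    using finite_sets_through[of n u] by (intro card_mono) (auto simp: B_def)
  ultimately show ?thesis
    using mult_right_mono[OF of_nat_mono[OF card_le] \<open>\<zeta> \<ge> 0\<close>] by (simp add: mult_ac)
qed

lemma sum_cube_flip:
  fixes A :: "(nat \<Rightarrow> real) \<Rightarrow> real"
  assumes u: "u < n"
  shows "(\<Sum>x\<in>cube n. A x) = (\<Sum>x\<in>cube n. (A (x(u := 1)) + A (x(u := -1))) / 2)"
proof -
  let ?r = "\<lambda>x. x(u := - x u)"
  have r: "?r \<in> cube n \<rightarrow> cube n"
  proof
    fix x assume x: "x \<in> cube n"
    then show "?r x \<in> cube n" using cube_coord[OF x u] by (intro fun_upd_in_cube[OF x u]) auto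
  qed
  have "bij_betw ?r (cube n) (cube n)"
    by (rule bij_betwI[OF r r]) (simp_all add: fun_eq_iff)
  then have "(\<Sum>x\<in>cube n. A (?r x)) = (\<Sum>x\<in>cube n. A x)"
    by (rule sum.reindex_bij_betw)
  then have "(\<Sum>x\<in>cube n. A x) = (\<Sum>x\<in>cube n. (A x + A (?r x)) / 2)"
    by (simp add: sum.distrib sum_divide_distrib[symmetric])
  also have "\<dots> = (\<Sum>x\<in>cube n. (A (x(u := 1)) + A (x(u := -1))) / 2)"
  proof (intro sum.cong refl)
    fix x assume x: "x \<in> cube n"
    consider "x u = 1" | "x u = -1" using cube_coord[OF x u] by blast
    then show "(A x + A (?r x)) / 2 = (A (x(u := 1)) + A (x(u := -1))) / 2"
      by cases (simp_all add: fun_upd_idem)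
  qed
  finally show ?thesis .
qed

lemma sum_rbm_marginal_cond_prob_one:
  assumes u: "u < n"
  shows "(\<Sum>x\<in>cube n. rbm_marginal n m J h g x * H x)
       = (\<Sum>x\<in>cube n. rbm_marginal n m J h g x * (cond_prob_one n m J h g u x * H (x(u := 1))
                                 + (1 - cond_prob_one n m J h g u x) * H (x(u := -1))))"
proof -
  define p where "p = rbm_marginal n m J h g"
  define \<pi> where "\<pi> = cond_prob_one n m J h g u"
  define E where "E x = \<pi> x * H (x(u := 1)) + (1 - \<pi> x) * H (x(u := -1))" for x
  have E_upd: "E (x(u := v)) = E x" for x v by (simp add: E_def \<pi>_def cond_prob_one_def)
  have pair: "(P1 + P2) * (P1 / (P1 + P2) * H1 + (1 - P1 / (P1 + P2)) * H2) = P1 * H1 + P2 * H2"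
    if "P1 + P2 \<noteq> 0" for P1 P2 H1 H2 :: real
  proof -
    define q where "q = P1 / (P1 + P2)"
    have "(P1 + P2) * (q * H1 + (1 - q) * H2) = ((P1 + P2) * q) * H1 + ((P1 + P2) * (1 - q)) * H2"
      by (simp add: algebra_simps)
    also have "(P1 + P2) * q = P1" using that by (simp add: q_def)
    also have "(P1 + P2) * (1 - q) = P2" using that by (simp add: q_def field_simps)
    finally show ?thesis by (simp add: q_def)
  qed
  have "p (x(u := 1)) * E x + p (x(u := -1)) * E x = p (x(u := 1)) * H (x(u := 1)) + p (x(u := -1)) * H (x(u := -1))"
    for x
  proof -
    have "p (x(u := 1)) + p (x(u := -1)) > 0" by (simp add: p_def rbm_marginal_pos add_pos_pos)
    then show ?thesis
      using pair by (simp add: E_def \<pi>_def cond_prob_one_def p_def[symmetric] distrib_right[symmetric])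
  qed
  then have "(\<Sum>x\<in>cube n. p x * H x) = (\<Sum>x\<in>cube n. p x * E x)"
    by (simp add: sum_cube_flip[OF u, of "\<lambda>x. p x * H x"] sum_cube_flip[OF u, of "\<lambda>x. p x * E x"] E_upd)
  then show ?thesis by (simp add: p_def \<pi>_def E_def)
qed

lemma feat_dot_fun_upd_notin: "u \<notin> N \<Longrightarrow> feat_dot N w (x(u := v)) = feat_dot N w x"
  unfolding feat_dot_def by (intro sum.cong refl) (auto intro!: chi_fun_upd_notin)

lemma abs_feat_dot_le_l1_norm:
  assumes "x \<in> cube n" "N \<subseteq> {..<n}"
  shows "\<bar>feat_dot N w x\<bar> \<le> l1_norm N w"
proof -
  have "\<bar>feat_dot N w x\<bar> \<le> (\<Sum>T\<in>Pow N. \<bar>w T * chi T x\<bar>)" unfolding feat_dot_def by (rule sum_abs)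
  also have "\<dots> = l1_norm N w" unfolding l1_norm_def
    using assms by (intro sum.cong refl) (auto simp: abs_mult abs_chi_cube)
  finally show ?thesis .
qed

definition population_loss ::
  "nat \<Rightarrow> nat \<Rightarrow> (nat \<Rightarrow> nat \<Rightarrow> real) \<Rightarrow> (nat \<Rightarrow> real) \<Rightarrow> (nat \<Rightarrow> real) \<Rightarrow> nat \<Rightarrow> nat set \<Rightarrow> (nat set \<Rightarrow> real) \<Rightarrow> real"
  where "population_loss n m J h g u N w =
           (\<Sum>x\<in>cube n. rbm_marginal n m J h g x * logistic_loss (x u * feat_dot N w x))"

lemma population_loss_diff_eq:
  assumes "u < n" "u \<notin> N"
  shows "population_loss n m J h g u N w - population_loss n m J h g u N w'
       = (\<Sum>x\<in>cube n. rbm_marginal n m J h g x *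
            (bernoulli_kl (rbm_logit n m J h g u x) (feat_dot N w x)
             - bernoulli_kl (rbm_logit n m J h g u x) (feat_dot N w' x)))"
proof -
  let ?a = "rbm_logit n m J h g u"
  let ?p = "rbm_marginal n m J h g" and ?\<pi> = "cond_prob_one n m J h g u"
  define H where "H x = logistic_loss (x u * feat_dot N w x) - logistic_loss (x u * feat_dot N w' x)" for x
  have "population_loss n m J h g u N w - population_loss n m J h g u N w' = (\<Sum>x\<in>cube n. ?p x * H x)"
    by (simp add: population_loss_def H_def sum_subtractf[symmetric] right_diff_distrib)
  also have "\<dots> = (\<Sum>x\<in>cube n. ?p x * (?\<pi> x * H (x(u := 1)) + (1 - ?\<pi> x) * H (x(u := -1))))"
    by (rule sum_rbm_marginal_cond_prob_one[OF assms(1)])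
  also have "\<dots> = (\<Sum>x\<in>cube n. ?p x * (bernoulli_kl (?a x) (feat_dot N w x) - bernoulli_kl (?a x) (feat_dot N w' x)))"
    by (simp add: H_def feat_dot_fun_upd_notin[OF assms(2)] cond_prob_one_eq_sigmoid bernoulli_kl_def
        sigmoid_minus algebra_simps)
  finally show ?thesis .
qed

lemma bernoulli_kl_le_of_close:
  assumes "\<bar>a - F\<bar> \<le> 2 * e" and "\<bar>F\<bar> \<le> 2 * \<gamma>"
  shows "bernoulli_kl a F \<le> 3 / 4 * e\<^sup>2 * (1 + exp (2 * \<gamma>))"
proof -
  have "\<bar>sigmoid a - sigmoid F\<bar> \<le> e / 2" using sigmoid_lipschitz[of a F] assms(1) by simp
  then have "(sigmoid a - sigmoid F)\<^sup>2 \<le> (e / 2)\<^sup>2"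
    by (metis abs_ge_zero power2_abs power_mono)
  moreover have "2 + exp F + exp (- F) \<le> 3 * (1 + exp (2 * \<gamma>))"
  proof -
    have "exp F \<le> exp (2 * \<gamma>)" "exp (- F) \<le> exp (2 * \<gamma>)" "exp F \<le> 1 \<or> exp (- F) \<le> 1"
      using assms(2) by (auto simp: abs_le_iff)
    then show ?thesis by (smt (verit) exp_gt_zero)
  qed
  ultimately have "(sigmoid a - sigmoid F)\<^sup>2 * (2 + exp F + exp (- F)) \<le> (e / 2)\<^sup>2 * (3 * (1 + exp (2 * \<gamma>)))"
    by (intro mult_mono) (auto intro: add_nonneg_nonneg)
  then show ?thesis
    using bernoulli_kl_le_chi_square[of a F] by (simp add: power_divide algebra_simps)
qed

lemma excess_loss_le_of_deviations:
  assumes "M > 0" and erm: "log_loss N u M S w \<le> log_loss N u M S w'"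
    and dev: "centered_sum (cube n) (rbm_marginal n m J h g) M
                (\<lambda>x. logistic_loss (x u * feat_dot N w x)) S < real M * \<epsilon> / 2"
    and dev': "- centered_sum (cube n) (rbm_marginal n m J h g) M
                (\<lambda>x. logistic_loss (x u * feat_dot N w' x)) S < real M * \<epsilon> / 2"
  shows "population_loss n m J h g u N w - population_loss n m J h g u N w' \<le> \<epsilon>"
proof -
  have centered: "centered_sum (cube n) (rbm_marginal n m J h g) M (\<lambda>x. logistic_loss (x u * feat_dot N v x)) S
      = real M * population_loss n m J h g u N v - real M * log_loss N u M S v" for v
    using \<open>M > 0\<close>
    by (simp add: centered_sum_eq[OF sum_rbm_marginal] population_loss_def log_loss_def logistic_loss_def)
  have "real M * log_loss N u M S w \<le> real M * log_loss N u M S w'"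
    using erm by (rule mult_left_mono) simp
  then have "real M * (population_loss n m J h g u N w - population_loss n m J h g u N w') < real M * \<epsilon>"
    using dev dev' unfolding centered by (simp add: algebra_simps)
  then show ?thesis using \<open>M > 0\<close> by simp
qed

locale rbm_node =
  fixes n m :: nat and J :: "nat \<Rightarrow> nat \<Rightarrow> real" and h g :: "nat \<Rightarrow> real"
    and u :: nat and N :: "nat set" and \<zeta> \<gamma> \<psi> :: real
  assumes u_less: "u < n" and u_notin: "u \<notin> N" and N_subset: "N \<subseteq> {..<n}" and zeta_nonneg: "0 \<le> \<zeta>"
    and small_outside: "\<And>T. T \<in> sets_through n u \<Longrightarrow> \<not> T - {u} \<subseteq> N \<Longrightarrow>
                          \<bar>fourier_coeff n (rbm_f n m J h g) T\<bar> \<le> \<zeta>"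
    and coeff_l1_le: "(\<Sum>T\<in>sets_through n u. \<bar>fourier_coeff n (rbm_f n m J h g) T\<bar>) \<le> \<gamma>"
    and support_card_le: "real (card {T\<in>sets_through n u. fourier_coeff n (rbm_f n m J h g) T \<noteq> 0}) \<le> \<psi>"
begin

lemma gamma_nonneg: "0 \<le> \<gamma>"
  using coeff_l1_le by (meson sum_nonneg abs_ge_zero order_trans)

lemma l1_norm_fourier_weights: "l1_norm N (fourier_weights n (rbm_f n m J h g) u) \<le> 2 * \<gamma>"
  using l1_norm_fourier_weights_le[OF u_less u_notin N_subset, of "rbm_f n m J h g"] coeff_l1_le by linarith

lemma pred_mse_le_of_excess_loss:
  assumes zp: "(\<zeta> * \<psi>)\<^sup>2 * (1 + exp (2 * \<gamma>)) \<le> \<epsilon>" and "0 \<le> \<epsilon>"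
    and excess: "population_loss n m J h g u N w
                   - population_loss n m J h g u N (fourier_weights n (rbm_f n m J h g) u) \<le> \<epsilon>"
  shows "pred_mse n m J h g u N w \<le> \<epsilon>"
proof -
  let ?p = "rbm_marginal n m J h g"
  define a where "a = rbm_logit n m J h g u"
  define Fw where "Fw = feat_dot N w"
  define Ft where "Ft = feat_dot N (fourier_weights n (rbm_f n m J h g) u)"
  have p: "?p x \<ge> 0" for x using rbm_marginal_pos[of n m J h g x] by simp
  have kl_Ft: "bernoulli_kl (a x) (Ft x) \<le> 3 / 4 * \<epsilon>" if x: "x \<in> cube n" for x
  proof -
    have "\<bar>a x - Ft x\<bar> \<le> 2 * (\<zeta> * \<psi>)"
      using logit_truncation_error[OF u_less u_notin N_subset x zeta_nonneg small_outside]
        mult_left_mono[OF support_card_le, of "2 * \<zeta>"] zeta_nonneg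
      unfolding a_def Ft_def rbm_logit_def by (simp add: mult.assoc)
    moreover have "\<bar>Ft x\<bar> \<le> 2 * \<gamma>"
      using abs_feat_dot_le_l1_norm[OF x N_subset] l1_norm_fourier_weights unfolding Ft_def by (rule order_trans)
    ultimately have "bernoulli_kl (a x) (Ft x) \<le> 3 / 4 * (\<zeta> * \<psi>)\<^sup>2 * (1 + exp (2 * \<gamma>))"
      by (rule bernoulli_kl_le_of_close)
    then show ?thesis using zp by simp
  qed
  have "pred_mse n m J h g u N w = (\<Sum>x\<in>cube n. ?p x * (sigmoid (a x) - sigmoid (Fw x))\<^sup>2)"
    by (simp add: pred_mse_def cond_prob_one_eq_sigmoid a_def Fw_def)
  also have "\<dots> \<le> (\<Sum>x\<in>cube n. ?p x * (bernoulli_kl (a x) (Fw x) / 2))"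
    using bernoulli_kl_ge_pinsker p by (intro sum_mono mult_left_mono) (auto simp: field_simps)
  also have "\<dots> = ((\<Sum>x\<in>cube n. ?p x * (bernoulli_kl (a x) (Fw x) - bernoulli_kl (a x) (Ft x)))
                   + (\<Sum>x\<in>cube n. ?p x * bernoulli_kl (a x) (Ft x))) / 2"
    by (simp add: sum_divide_distrib[symmetric] sum.distrib[symmetric] algebra_simps)
  also have "\<dots> \<le> (\<epsilon> + (\<Sum>x\<in>cube n. ?p x * (3 / 4 * \<epsilon>))) / 2"
    using excess kl_Ft p
    unfolding population_loss_diff_eq[OF u_less u_notin] a_def[symmetric] Fw_def[symmetric] Ft_def[symmetric]
    by (intro divide_right_mono add_mono sum_mono mult_left_mono) auto
  also have "\<dots> = (\<epsilon> + 3 / 4 * \<epsilon>) / 2"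
    by (subst sum_distrib_right[symmetric]) (simp add: sum_rbm_marginal)
  also have "\<dots> \<le> \<epsilon>" using \<open>0 \<le> \<epsilon>\<close> by simp
  finally show ?thesis .
qed

lemma logistic_deviation_tail_le:
  assumes W: "finite W" "W \<noteq> {}" "\<And>w. w \<in> W \<Longrightarrow> l1_norm N w \<le> 2 * \<gamma>"
    and om: "\<And>S. S \<in> PiE {..<M} (\<lambda>_. cube n) \<Longrightarrow> \<omega> S \<in> W"
    and "\<gamma> > 0" "\<epsilon> \<ge> 0" "\<bar>s\<bar> = 1" "card N \<le> D"
  shows "iid_expect (cube n) (rbm_marginal n m J h g) M
           (\<lambda>S. if real M * \<epsilon> / 2 \<le> s * centered_sum (cube n) (rbm_marginal n m J h g) M
                                        (\<lambda>x. logistic_loss (x u * feat_dot N (\<omega> S) x)) S then 1 else 0)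
         \<le> 2 * 2 ^ D * exp (- (real M * \<epsilon>\<^sup>2 / (128 * \<gamma>\<^sup>2)))"
proof -
  let ?p = "rbm_marginal n m J h g"
  define \<phi> where "\<phi> t = s * (logistic_loss t - ln 2)" for t
    \<comment> \<open>shifted so that \<open>\<phi> 0 = 0\<close>, as the contraction principle requires\<close>
  define ph where "ph T x = x u * chi T x" for T and x :: "nat \<Rightarrow> real"
  have p: "\<And>x. ?p x \<ge> 0" "sum ?p (cube n) = 1"
    using rbm_marginal_pos[of n m J h g] by (auto simp: less_imp_le sum_rbm_marginal)
  have finN: "finite N" using N_subset finite_subset by blast
  have feat: "(\<Sum>T\<in>Pow N. w T * ph T x) = x u * feat_dot N w x" for w x
    by (simp add: ph_def feat_dot_def sum_distrib_left mult_ac)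
  have bnd: "\<bar>ph T x\<bar> \<le> 1" if "T \<in> Pow N" "x \<in> cube n" for T x
    using that cube_coord[OF that(2) u_less] abs_chi_cube[OF that(2)] N_subset
    by (auto simp: ph_def abs_mult)
  have lip: "\<bar>\<phi> x - \<phi> y\<bar> \<le> \<bar>x - y\<bar>" for x y
    using logistic_loss_lipschitz[of x y] \<open>\<bar>s\<bar> = 1\<close> by (simp add: \<phi>_def abs_mult right_diff_distrib[symmetric])
  have shift: "s * centered_sum (cube n) ?p M (\<lambda>x. logistic_loss (x u * feat_dot N w x)) S
      = centered_sum (cube n) ?p M (\<lambda>x. \<phi> (\<Sum>T\<in>Pow N. w T * ph T x)) S" for w S
    using centered_sum_affine[OF p(2), of M s _ "- s * ln 2" S] by (simp add: \<phi>_def feat algebra_simps)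
  have "iid_expect (cube n) ?p M (\<lambda>S. if real M * (\<epsilon> / 2) \<le> centered_sum (cube n) ?p M
                                       (\<lambda>x. \<phi> (\<Sum>T\<in>Pow N. \<omega> S T * ph T x)) S then 1 else 0)
      \<le> 2 * real (card (Pow N)) * exp (- (real M * (\<epsilon> / 2)\<^sup>2 / (8 * (2 * \<gamma>)\<^sup>2)))"
    using \<open>\<gamma> > 0\<close> \<open>\<epsilon> \<ge> 0\<close> W om bnd lip
    by (intro uniform_deviation_tail_le[OF finite_cube p W(1,2)])
       (auto simp: \<phi>_def l1_norm_def finN)
  also have "\<dots> \<le> 2 * 2 ^ D * exp (- (real M * \<epsilon>\<^sup>2 / (128 * \<gamma>\<^sup>2)))"
    using \<open>card N \<le> D\<close> finN by (simp add: card_Pow power_divide power_mult_distrib)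
  finally show ?thesis by (simp add: shift)
qed

lemma pred_mse_le_of_small_deviations:
  assumes "M > 0" "0 \<le> \<epsilon>" and zp: "(\<zeta> * \<psi>)\<^sup>2 * (1 + exp (2 * \<gamma>)) \<le> \<epsilon>"
    and erm: "is_regression_estimate N u M S \<gamma> w"
    and dev: "\<not> real M * \<epsilon> / 2 \<le> centered_sum (cube n) (rbm_marginal n m J h g) M
                  (\<lambda>x. logistic_loss (x u * feat_dot N w x)) S"
    and dev': "\<not> real M * \<epsilon> / 2 \<le> - centered_sum (cube n) (rbm_marginal n m J h g) M
                  (\<lambda>x. logistic_loss (x u * feat_dot N (fourier_weights n (rbm_f n m J h g) u) x)) S"
  shows "pred_mse n m J h g u N w \<le> \<epsilon>"
proof (rule pred_mse_le_of_excess_loss[OF zp \<open>0 \<le> \<epsilon>\<close>])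
  have "log_loss N u M S w \<le> log_loss N u M S (fourier_weights n (rbm_f n m J h g) u)"
    using erm l1_norm_fourier_weights by (simp add: is_regression_estimate_def)
  then show "population_loss n m J h g u N w
      - population_loss n m J h g u N (fourier_weights n (rbm_f n m J h g) u) \<le> \<epsilon>"
    using excess_loss_le_of_deviations[OF \<open>M > 0\<close>] dev dev' unfolding not_le by blast
qed

lemma pred_mse_le_of_gamma_zero:
  assumes "\<gamma> = 0" "0 \<le> \<epsilon>" and zp: "(\<zeta> * \<psi>)\<^sup>2 * (1 + exp (2 * \<gamma>)) \<le> \<epsilon>"
    and "l1_norm N w \<le> 2 * \<gamma>"
  shows "pred_mse n m J h g u N w \<le> \<epsilon>"
proof (rule pred_mse_le_of_excess_loss[OF zp \<open>0 \<le> \<epsilon>\<close>])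
  have feat_zero: "feat_dot N v x = 0" if "l1_norm N v \<le> 0" "x \<in> cube n" for v x
    using abs_feat_dot_le_l1_norm[OF that(2) N_subset, of v] that(1) by simp
  have "l1_norm N w \<le> 0" "l1_norm N (fourier_weights n (rbm_f n m J h g) u) \<le> 0"
    using assms(1,4) l1_norm_fourier_weights by simp_all
  then show "population_loss n m J h g u N w
      - population_loss n m J h g u N (fourier_weights n (rbm_f n m J h g) u) \<le> \<epsilon>"
    using \<open>0 \<le> \<epsilon>\<close> feat_zero by (simp add: population_loss_def)
qed

lemma failure_prob_le_of_gamma_pos:
  assumes "\<gamma> > 0" "\<epsilon> > 0" "\<delta> > 0" "M > 0" "card N \<le> D"
    and zp: "(\<zeta> * \<psi>)\<^sup>2 * (1 + exp (2 * \<gamma>)) \<le> \<epsilon>"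
    and erm: "\<And>S. S \<in> PiE {..<M} (\<lambda>_. cube n) \<Longrightarrow> is_regression_estimate N u M S \<gamma> (What S)"
    and M: "ln (8 * real n * 2 ^ D / \<delta>) \<le> real M * \<epsilon>\<^sup>2 / (128 * \<gamma>\<^sup>2)"
  shows "iid_expect (cube n) (rbm_marginal n m J h g) M
           (\<lambda>S. if pred_mse n m J h g u N (What S) \<le> \<epsilon> then 0 else 1) \<le> \<delta> / (2 * real n)"
proof -
  let ?p = "rbm_marginal n m J h g"
  let ?c = "\<lambda>w S. centered_sum (cube n) ?p M (\<lambda>x. logistic_loss (x u * feat_dot N w x)) S"
  define w\<^sub>0 where "w\<^sub>0 = fourier_weights n (rbm_f n m J h g) u"
  define W where "W = insert w\<^sub>0 (What ` PiE {..<M} (\<lambda>_. cube n))"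
  define K where "K = 2 * 2 ^ D * exp (- (real M * \<epsilon>\<^sup>2 / (128 * \<gamma>\<^sup>2)))"
  have p: "\<And>x. ?p x \<ge> 0" using rbm_marginal_pos less_imp_le by blast
  have W: "finite W" "W \<noteq> {}" "\<And>w. w \<in> W \<Longrightarrow> l1_norm N w \<le> 2 * \<gamma>"
    using erm l1_norm_fourier_weights
    by (auto simp: W_def w\<^sub>0_def finite_PiE finite_cube is_regression_estimate_def)
  have tail: "iid_expect (cube n) ?p M (\<lambda>S. if real M * \<epsilon> / 2 \<le> ?c (What S) S then 1 else 0) \<le> K"
    "iid_expect (cube n) ?p M (\<lambda>S. if real M * \<epsilon> / 2 \<le> - ?c w\<^sub>0 S then 1 else 0) \<le> K"
    using logistic_deviation_tail_le[OF W, of M What \<epsilon> 1 D]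
      logistic_deviation_tail_le[OF W, of M "\<lambda>_. w\<^sub>0" \<epsilon> "-1" D] assms
    by (simp_all add: W_def K_def)
  have "iid_expect (cube n) ?p M (\<lambda>S. if pred_mse n m J h g u N (What S) \<le> \<epsilon> then 0 else 1)
      \<le> iid_expect (cube n) ?p M (\<lambda>S. (if real M * \<epsilon> / 2 \<le> ?c (What S) S then 1 else 0)
                                    + (if real M * \<epsilon> / 2 \<le> - ?c w\<^sub>0 S then 1 else 0))"
  proof (rule iid_expect_mono[OF p])
    fix S assume "S \<in> PiE {..<M} (\<lambda>_. cube n)"
    note good = pred_mse_le_of_small_deviations[OF \<open>M > 0\<close> _ zp erm[OF this]]
    show "(if pred_mse n m J h g u N (What S) \<le> \<epsilon> then 0 else 1)
        \<le> (if real M * \<epsilon> / 2 \<le> ?c (What S) S then 1 else 0)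
           + (if real M * \<epsilon> / 2 \<le> - ?c w\<^sub>0 S then 1 else 0 :: real)"
      using \<open>\<epsilon> > 0\<close>
      by (cases "real M * \<epsilon> / 2 \<le> ?c (What S) S"; cases "real M * \<epsilon> / 2 \<le> - ?c w\<^sub>0 S")
         (simp_all add: good w\<^sub>0_def)
  qed
  also have "\<dots> \<le> K + K"
    using tail by (simp add: iid_expect_add)
  also have "\<dots> \<le> \<delta> / (2 * real n)"
  proof -
    have "exp (- (real M * \<epsilon>\<^sup>2 / (128 * \<gamma>\<^sup>2))) \<le> exp (- ln (8 * real n * 2 ^ D / \<delta>))"
      using M by simp
    also have "\<dots> = \<delta> / (8 * real n * 2 ^ D)"
      using u_less \<open>\<delta> > 0\<close> by (simp add: exp_minus)
    finally show ?thesis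
      using u_less by (simp add: K_def field_simps)
  qed
  finally show ?thesis .
qed

lemma failure_prob_le:
  assumes "\<epsilon> > 0" "\<delta> > 0" "\<delta> < 1" "card N \<le> D"
    and zp: "\<zeta> * \<psi> * sqrt (1 + exp (2 * \<gamma>)) \<le> sqrt \<epsilon>"
    and erm: "\<And>S. S \<in> PiE {..<M} (\<lambda>_. cube n) \<Longrightarrow> is_regression_estimate N u M S \<gamma> (What S)"
    and M: "128 * \<gamma>\<^sup>2 * ln (8 * real n * 2 ^ D / \<delta>) / \<epsilon>\<^sup>2 \<le> real M"
  shows "iid_expect (cube n) (rbm_marginal n m J h g) M
           (\<lambda>S. if pred_mse n m J h g u N (What S) \<le> \<epsilon> then 0 else 1) \<le> \<delta> / (2 * real n)"
proof -
  have "0 \<le> \<psi>" using support_card_le by (meson of_nat_0_le_iff order_trans)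
  then have "(\<zeta> * \<psi> * sqrt (1 + exp (2 * \<gamma>)))\<^sup>2 \<le> (sqrt \<epsilon>)\<^sup>2"
    using zp zeta_nonneg by (intro power_mono) auto
  then have zp2: "(\<zeta> * \<psi>)\<^sup>2 * (1 + exp (2 * \<gamma>)) \<le> \<epsilon>"
    using \<open>\<epsilon> > 0\<close> by (simp add: power_mult_distrib add_pos_pos)
  show ?thesis
  proof (cases "\<gamma> = 0")
    case True
    then have "iid_expect (cube n) (rbm_marginal n m J h g) M
        (\<lambda>S. if pred_mse n m J h g u N (What S) \<le> \<epsilon> then 0 else 1) = iid_expect (cube n) (rbm_marginal n m J h g) M (\<lambda>_. 0)"
      using pred_mse_le_of_gamma_zero[OF True _ zp2] erm \<open>\<epsilon> > 0\<close>
      by (auto simp: iid_expect_def is_regression_estimate_def intro!: sum.cong)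
    then show ?thesis using \<open>\<delta> > 0\<close> by (simp add: iid_expect_def)
  next
    case False
    then have "\<gamma> > 0" using gamma_nonneg by simp
    have "1 * 1 \<le> real n * 2 ^ D" using u_less by (intro mult_mono) auto
    then have "1 < 8 * real n * 2 ^ D / \<delta>"
      using \<open>\<delta> > 0\<close> \<open>\<delta> < 1\<close> by (simp add: field_simps)
    then have "0 < 128 * \<gamma>\<^sup>2 * ln (8 * real n * 2 ^ D / \<delta>) / \<epsilon>\<^sup>2"
      using \<open>\<gamma> > 0\<close> \<open>\<epsilon> > 0\<close> by simp
    then have "M > 0" using M by linarith
    have "ln (8 * real n * 2 ^ D / \<delta>) \<le> real M * \<epsilon>\<^sup>2 / (128 * \<gamma>\<^sup>2)"
      using M \<open>\<gamma> > 0\<close> \<open>\<epsilon> > 0\<close> by (simp add: field_simps)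
    then show ?thesis
      using failure_prob_le_of_gamma_pos[OF \<open>\<gamma> > 0\<close> \<open>\<epsilon> > 0\<close> \<open>\<delta> > 0\<close> \<open>M > 0\<close> \<open>card N \<le> D\<close> zp2 erm] by simp
  qed
qed

end

lemma rbm_node_of_nbhd:
  assumes u: "u < n" and "0 \<le> \<zeta>" and N: "N \<subseteq> mrf_nbhd n (rbm_f n m J h g) u"
    and large: "\<forall>i T. T \<subseteq> {..<n} \<and> u \<in> T \<and> i \<in> T \<and> i \<noteq> u \<and> \<bar>fourier_coeff n (rbm_f n m J h g) T\<bar> \<ge> \<zeta> \<longrightarrow> i \<in> N"
  shows "rbm_node n m J h g u N \<zeta> (gamma_param n (rbm_f n m J h g)) (real (psi_param n (rbm_f n m J h g)))"
proof
  show "u < n" "0 \<le> \<zeta>" by fact+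
  show "u \<notin> N" "N \<subseteq> {..<n}" using N by (auto simp: mrf_nbhd_def)
  show "\<bar>fourier_coeff n (rbm_f n m J h g) T\<bar> \<le> \<zeta>"
    if T: "T \<in> sets_through n u" "\<not> T - {u} \<subseteq> N" for T
  proof -
    from T(2) obtain i where "i \<in> T" "i \<noteq> u" "i \<notin> N" by blast
    with T(1) large[rule_format, where i=i and T=T] show ?thesis by (force simp: sets_through_def)
  qed
  show "(\<Sum>T\<in>sets_through n u. \<bar>fourier_coeff n (rbm_f n m J h g) T\<bar>) \<le> gamma_param n (rbm_f n m J h g)"
    unfolding gamma_param_def sets_through_def using u by (intro Max_ge) auto
  show "real (card {T\<in>sets_through n u. fourier_coeff n (rbm_f n m J h g) T \<noteq> 0}) \<le> real (psi_param n (rbm_f n m J h g))"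
    unfolding psi_param_def sets_through_def using u by (subst of_nat_le_iff) (intro Max_ge, auto)
qed

lemma card_le_max_degree:
  assumes "u < n" "N \<subseteq> mrf_nbhd n F u"
  shows "card N \<le> max_degree n F"
proof -
  have "card N \<le> card (mrf_nbhd n F u)"
    using assms(2) by (intro card_mono) (auto simp: mrf_nbhd_def)
  also have "\<dots> \<le> max_degree n F"
    unfolding max_degree_def using assms(1) by (intro Max_ge) auto
  finally show ?thesis .
qed

lemma sample_prob_eq_iid_expect:
  "sample_prob n m J h g M E = iid_expect (cube n) (rbm_marginal n m J h g) M (\<lambda>S. if E S then 1 else 0)"
  unfolding sample_prob_def iid_expect_def
  by (simp add: sum.inter_filter[symmetric] finite_PiE finite_cube if_distrib cong: if_cong)

lemma sample_prob_nonneg: "sample_prob n m J h g M E \<ge> 0"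
  unfolding sample_prob_eq_iid_expect by (intro iid_expect_nonneg) (auto simp: less_imp_le rbm_marginal_pos)

lemma sample_prob_all_ge:
  "sample_prob n m J h g M (\<lambda>S. \<forall>u<n. P u S)
     \<ge> 1 - (\<Sum>u<n. iid_expect (cube n) (rbm_marginal n m J h g) M (\<lambda>S. if P u S then 0 else 1))"
  using iid_expect_all_ge[OF finite_cube _ sum_rbm_marginal finite_lessThan[of n], where M = M and P = P]
  by (simp add: sample_prob_eq_iid_expect Ball_def less_imp_le rbm_marginal_pos)

lemma failure_prob_at_node_le:
  assumes u: "u < n" and "0 < \<epsilon>" "0 < \<delta>" "\<delta> < 1" "0 < \<zeta>"
    and nb: "\<forall>u<n. nb u \<subseteq> mrf_nbhd n (rbm_f n m J h g) u \<and>
       (\<forall>i T. T \<subseteq> {..<n} \<and> u \<in> T \<and> i \<in> T \<and> i \<noteq> u \<and>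
              \<bar>fourier_coeff n (rbm_f n m J h g) T\<bar> \<ge> \<zeta> \<longrightarrow> i \<in> nb u)"
    and erm: "\<forall>u<n. \<forall>S\<in>PiE {..<M} (\<lambda>_. cube n).
       is_regression_estimate (nb u) u M S (gamma_param n (rbm_f n m J h g)) (What u S)"
    and M: "real M \<ge> 128 * (gamma_param n (rbm_f n m J h g))\<^sup>2 *
       ln (8 * real n * 2 ^ max_degree n (rbm_f n m J h g) / \<delta>) / \<epsilon>\<^sup>2"
    and zp: "\<zeta> * real (psi_param n (rbm_f n m J h g)) *
       sqrt (1 + exp (2 * gamma_param n (rbm_f n m J h g))) \<le> sqrt \<epsilon>"
  shows "iid_expect (cube n) (rbm_marginal n m J h g) M
           (\<lambda>S. if pred_mse n m J h g u (nb u) (What u S) \<le> \<epsilon> then 0 else 1) \<le> \<delta> / (2 * real n)"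
proof -
  have nb_u: "nb u \<subseteq> mrf_nbhd n (rbm_f n m J h g) u" using nb u by blast
  have node: "rbm_node n m J h g u (nb u) \<zeta> (gamma_param n (rbm_f n m J h g)) (psi_param n (rbm_f n m J h g))"
    using nb u \<open>0 < \<zeta>\<close> by (intro rbm_node_of_nbhd) auto
  have erm_u: "\<And>S. S \<in> PiE {..<M} (\<lambda>_. cube n) \<Longrightarrow>
      is_regression_estimate (nb u) u M S (gamma_param n (rbm_f n m J h g)) (What u S)"
    using erm u by blast
  show ?thesis
    by (rule rbm_node.failure_prob_le[OF node assms(2-4) card_le_max_degree[OF u nb_u] zp erm_u M])
qed

lemma rbm_regression_guarantee:
  assumes "0 < \<delta>" "0 < \<epsilon>" "0 < \<zeta>"
    and nb: "\<forall>u<n. nb u \<subseteq> mrf_nbhd n (rbm_f n m J h g) u \<and>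
       (\<forall>i T. T \<subseteq> {..<n} \<and> u \<in> T \<and> i \<in> T \<and> i \<noteq> u \<and>
              \<bar>fourier_coeff n (rbm_f n m J h g) T\<bar> \<ge> \<zeta> \<longrightarrow> i \<in> nb u)"
    and erm: "\<forall>u<n. \<forall>S\<in>PiE {..<M} (\<lambda>_. cube n).
       is_regression_estimate (nb u) u M S (gamma_param n (rbm_f n m J h g)) (What u S)"
    and M: "real M \<ge> 128 * (gamma_param n (rbm_f n m J h g))\<^sup>2 *
       ln (8 * real n * 2 ^ max_degree n (rbm_f n m J h g) / \<delta>) / \<epsilon>\<^sup>2"
    and zp: "\<zeta> * real (psi_param n (rbm_f n m J h g)) *
       sqrt (1 + exp (2 * gamma_param n (rbm_f n m J h g))) \<le> sqrt \<epsilon>"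
  shows "sample_prob n m J h g M (\<lambda>S. \<forall>u<n. pred_mse n m J h g u (nb u) (What u S) \<le> \<epsilon>) \<ge> 1 - \<delta>"
proof (cases "\<delta> < 1")
  case True
  let ?fail = "\<lambda>u. iid_expect (cube n) (rbm_marginal n m J h g) M
                  (\<lambda>S. if pred_mse n m J h g u (nb u) (What u S) \<le> \<epsilon> then 0 else 1)"
  have "(\<Sum>u<n. ?fail u) \<le> real n * (\<delta> / (2 * real n))"
    using failure_prob_at_node_le[OF _ assms(2,1) True assms(3) nb erm M zp]
    by (intro order_trans[OF sum_bounded_above]) auto
  also have "\<dots> \<le> \<delta>" using \<open>0 < \<delta>\<close> by (cases "n = 0") (simp_all add: field_simps)
  finally show ?thesis
    using sample_prob_all_ge[of n m J h g M "\<lambda>u S. pred_mse n m J h g u (nb u) (What u S) \<le> \<epsilon>"]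
    by linarith
next
  case False
  then show ?thesis
    using sample_prob_nonneg[of n m J h g M "\<lambda>S. \<forall>u<n. pred_mse n m J h g u (nb u) (What u S) \<le> \<epsilon>"]
    by linarith
qed

theorem theorem9:
  shows "\<exists>C>0. \<forall>(n::nat) (m::nat) (J::nat \<Rightarrow> nat \<Rightarrow> real) (h::nat \<Rightarrow> real) (g::nat \<Rightarrow> real)
      (\<delta>::real) (\<epsilon>::real) (\<zeta>::real) (nb::nat \<Rightarrow> nat set) (M::nat)
      (What::nat \<Rightarrow> (nat \<Rightarrow> nat \<Rightarrow> real) \<Rightarrow> nat set \<Rightarrow> real).
    \<delta> > 0 \<longrightarrow> \<epsilon> > 0 \<longrightarrow> \<zeta> > 0 \<longrightarrow>
    (\<forall>u<n. nb u \<subseteq> mrf_nbhd n (rbm_f n m J h g) u \<and>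
       (\<forall>i T. T \<subseteq> {..<n} \<and> u \<in> T \<and> i \<in> T \<and> i \<noteq> u \<and>
              \<bar>fourier_coeff n (rbm_f n m J h g) T\<bar> \<ge> \<zeta> \<longrightarrow> i \<in> nb u)) \<longrightarrow>
    (\<forall>u<n. \<forall>S\<in>PiE {..<M} (\<lambda>_. cube n).
       is_regression_estimate (nb u) u M S (gamma_param n (rbm_f n m J h g)) (What u S)) \<longrightarrow>
    real M \<ge> C * (gamma_param n (rbm_f n m J h g))\<^sup>2 *
       ln (8 * real n * 2 ^ max_degree n (rbm_f n m J h g) / \<delta>) / \<epsilon>\<^sup>2 \<longrightarrow>
    \<zeta> * real (psi_param n (rbm_f n m J h g)) *
       sqrt (1 + exp (2 * gamma_param n (rbm_f n m J h g))) \<le> sqrt \<epsilon> \<longrightarrow>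
    sample_prob n m J h g M
       (\<lambda>S. \<forall>u<n. pred_mse n m J h g u (nb u) (What u S) \<le> \<epsilon>) \<ge> 1 - \<delta>"
  by (intro exI[of _ 128] conjI allI impI) (simp_all add: rbm_regression_guarantee)

end
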